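(* Let $H$ be a finite, connected, $d$-regular graph on $[n]$ and $\Phi(x,y)$ a standard symmetric polynomial of partial degree $d$. Let $J$ be the set of improper points of $U(H,\Phi)$. Then (i) $J$ is finite; (ii) if $J\ne\emptyset$, then $\dim U(H,\Phi)=1$.
   Context: A symmetric polynomial $\Phi(x,y)\in\mathbb{C}[x,y]$ ($\Phi(x,y)=\Phi(y,x)$) has partial degree $d$ if its degree in $y$ is $d$. $\Phi$ is standard if it is squarefree, $\Phi(x,x)$ is not identically zero, and $\Phi$ has no nonconstant factor depending only on $x$ (or only on $y$). With $E$ the edge set of $H$: $S(H,\Phi)=\{\Phi(x_i,x_j): ij\in E\}$, $W(H,\Phi)=\mathbb{V}(S(H,\Phi))\subseteq\mathbb{C}^n$, $Z(H,\Phi)=W(H,\Phi)\cap\bigcup_{i>j}\mathbb{V}(x_i-x_j)$, and $U(H,\Phi)$ is the Zariski closure of $W(H,\Phi)\setminus Z(H,\Phi)$. A point $(u_1,\dots,u_n)$ is proper if its coordinates are pairwise distinct, improper otherwise. *)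

theory Defs
  imports "HOL-Computational_Algebra.Polynomial" "HOL-Computational_Algebra.Polynomial_Factorial"
          "HOL-Computational_Algebra.Squarefree"
begin

text \<open>A polynomial Phi(x,y) in C[x,y] is represented as a polynomial in y whose
  coefficients are polynomials in x.\<close>

definition eval2 :: "complex poly poly \<Rightarrow> complex \<Rightarrow> complex \<Rightarrow> complex" where
  "eval2 P x y = poly (map_poly (\<lambda>c. poly c x) P) y"

definition symmetric2 :: "complex poly poly \<Rightarrow> bool" where
  "symmetric2 P \<longleftrightarrow> (\<forall>x y. eval2 P x y = eval2 P y x)"

definition partial_degree :: "complex poly poly \<Rightarrow> nat" where
  "partial_degree P = degree P"

definition standard2 :: "complex poly poly \<Rightarrow> bool" where
  "standard2 P \<longleftrightarrow>
     squarefree P \<and>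
     (\<exists>x. eval2 P x x \<noteq> 0) \<and>
     (\<forall>p :: complex poly. degree p > 0 \<longrightarrow> \<not> ([:p:] dvd P)) \<and>
     (\<forall>q :: complex poly. degree q > 0 \<longrightarrow> \<not> (map_poly (\<lambda>c. [:c:]) q dvd P))"

inductive_set poly_fun :: "(('v \<Rightarrow> complex) \<Rightarrow> complex) set" where
  pf_const: "(\<lambda>_. c) \<in> poly_fun"
| pf_var: "(\<lambda>u. u i) \<in> poly_fun"
| pf_add: "f \<in> poly_fun \<Longrightarrow> g \<in> poly_fun \<Longrightarrow> (\<lambda>u. f u + g u) \<in> poly_fun"
| pf_mult: "f \<in> poly_fun \<Longrightarrow> g \<in> poly_fun \<Longrightarrow> (\<lambda>u. f u * g u) \<in> poly_fun"

definition zero_set :: "(('v \<Rightarrow> complex) \<Rightarrow> complex) set \<Rightarrow> ('v \<Rightarrow> complex) set" where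
  "zero_set S = {u. \<forall>f\<in>S. f u = 0}"

definition zariski_closed :: "('v \<Rightarrow> complex) set \<Rightarrow> bool" where
  "zariski_closed A \<longleftrightarrow> (\<exists>S. S \<subseteq> poly_fun \<and> A = zero_set S)"

definition zariski_closure :: "('v \<Rightarrow> complex) set \<Rightarrow> ('v \<Rightarrow> complex) set" where
  "zariski_closure A = \<Inter>{C. zariski_closed C \<and> A \<subseteq> C}"

definition zariski_irreducible :: "('v \<Rightarrow> complex) set \<Rightarrow> bool" where
  "zariski_irreducible Y \<longleftrightarrow> Y \<noteq> {} \<and>
     (\<forall>A B. zariski_closed A \<and> zariski_closed B \<and> Y \<subseteq> A \<union> B \<longrightarrow> Y \<subseteq> A \<or> Y \<subseteq> B)"

definition irred_chain :: "('v \<Rightarrow> complex) set \<Rightarrow> nat \<Rightarrow> bool" where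
  "irred_chain A k \<longleftrightarrow> (\<exists>Y :: nat \<Rightarrow> ('v \<Rightarrow> complex) set.
      (\<forall>i\<le>k. zariski_closed (Y i) \<and> zariski_irreducible (Y i) \<and> Y i \<subseteq> A) \<and>
      (\<forall>i<k. Y i \<subset> Y (Suc i)))"

text \<open>Dimension (Krull dimension of the Zariski topology) of a subset of C^V.
  Chains have length at most CARD('v), so the supremum is a maximum.\<close>
definition zariski_dim :: "('v::finite \<Rightarrow> complex) set \<Rightarrow> nat" where
  "zariski_dim A = Sup {k. irred_chain A k}"

definition simple_graph :: "('v \<Rightarrow> 'v \<Rightarrow> bool) \<Rightarrow> bool" where
  "simple_graph E \<longleftrightarrow> (\<forall>i j. E i j \<longrightarrow> E j i) \<and> (\<forall>i. \<not> E i i)"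

definition graph_connected :: "('v \<Rightarrow> 'v \<Rightarrow> bool) \<Rightarrow> bool" where
  "graph_connected E \<longleftrightarrow> (\<forall>i j. E\<^sup>*\<^sup>* i j)"

definition regular :: "('v \<Rightarrow> 'v \<Rightarrow> bool) \<Rightarrow> nat \<Rightarrow> bool" where
  "regular E d \<longleftrightarrow> (\<forall>i. card {j. E i j} = d)"

definition W_var :: "('v \<Rightarrow> 'v \<Rightarrow> bool) \<Rightarrow> complex poly poly \<Rightarrow> ('v \<Rightarrow> complex) set" where
  "W_var E P = {u. \<forall>i j. E i j \<longrightarrow> eval2 P (u i) (u j) = 0}"

definition Z_var :: "('v \<Rightarrow> 'v \<Rightarrow> bool) \<Rightarrow> complex poly poly \<Rightarrow> ('v \<Rightarrow> complex) set" where
  "Z_var E P = W_var E P \<inter> {u. \<exists>i j. i \<noteq> j \<and> u i = u j}"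

definition U_var :: "('v \<Rightarrow> 'v \<Rightarrow> bool) \<Rightarrow> complex poly poly \<Rightarrow> ('v \<Rightarrow> complex) set" where
  "U_var E P = zariski_closure (W_var E P - Z_var E P)"

definition improper :: "('v \<Rightarrow> complex) \<Rightarrow> bool" where
  "improper u \<longleftrightarrow> (\<exists>i j. i \<noteq> j \<and> u i = u j)"

end

theory Submission
  imports Defs "HOL-Library.FuncSet"
begin

text \<open>
  Fix a vertex i0.  Walking along the edges, each coordinate of a point of W is one of
  finitely many roots once x_i0 is fixed, so W has finite fibres over x_i0.  Algebraically,
  the functions on an irreducible closed Y \<subseteq> W form a finite module over C[x_i0] localised
  at one polynomial; hence every polynomial function f satisfies a relation
  R(x_i0, f) = 0 on Y with R(x, 0) \<noteq> 0 unless f vanishes on Y, so Y meets every closed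
  set not containing it in finitely many points: W is at most one-dimensional.  A free
  ultrafilter argument, with finite generation of submodules of C[x]^n in place of the
  Hilbert basis theorem, writes W as finitely many infinite irreducible curves plus a
  finite set.  A curve of improper points cannot lie in U, the closure of the proper
  points, since these are covered by the other curves and a finite set; so U has finitely
  many improper points.  If it has one, U is not finite (a finite closure is the set
  itself), so it contains a curve and has dimension exactly 1.
\<close>

section \<open>Linear algebra over polynomial rings\<close>

lemma nontrivial_linear_relation:
  fixes v :: "'k \<Rightarrow> 'e \<Rightarrow> 'a::idom"
  assumes "finite E" "finite K" "card E < card K"
  shows "\<exists>l. (\<exists>k\<in>K. l k \<noteq> 0) \<and> (\<forall>e\<in>E. (\<Sum>k\<in>K. l k * v k e) = 0)"
  using assms
proof (induction E arbitrary: K v rule: finite_induct)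
  case empty
  then obtain k where "k \<in> K" by fastforce
  then show ?case by (intro exI[of _ "\<lambda>k'. if k' = k then 1 else 0"]) auto
next
  case (insert e0 E)
  show ?case
  proof (cases "\<forall>k\<in>K. v k e0 = 0")
    case True
    from insert.IH[of K v] insert.prems insert.hyps obtain l where
      "\<exists>k\<in>K. l k \<noteq> 0" "\<forall>e\<in>E. (\<Sum>k\<in>K. l k * v k e) = 0" by auto
    with True show ?thesis by (intro exI[of _ l]) auto
  next
    case False
    then obtain p where p: "p \<in> K" "v p e0 \<noteq> 0" by auto
    define K' where "K' = K - {p}"
    define w where "w = (\<lambda>k e. v p e0 * v k e - v k e0 * v p e)"
      \<comment> \<open>eliminate the coordinate e0 using the pivot vector v p\<close>
    have "card E < card K'" using insert.prems insert.hyps p unfolding K'_def by auto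
    with insert.IH[of K' w] insert.prems obtain l where
      l: "\<exists>k\<in>K'. l k \<noteq> 0" "\<forall>e\<in>E. (\<Sum>k\<in>K'. l k * w k e) = 0" unfolding K'_def by auto
    define l' where "l' = (\<lambda>k. if k = p then - (\<Sum>k\<in>K'. l k * v k e0) else l k * v p e0)"
    have pK': "p \<notin> K'" unfolding K'_def by auto
    have eq: "(\<Sum>k\<in>K. l' k * v k e) = (\<Sum>k\<in>K'. l k * w k e)" for e
    proof -
      have "(\<Sum>k\<in>K. l' k * v k e) = l' p * v p e + (\<Sum>k\<in>K'. l' k * v k e)"
        using p insert.prems unfolding K'_def by (simp add: sum.remove)
      also have "(\<Sum>k\<in>K'. l' k * v k e) = (\<Sum>k\<in>K'. l k * v p e0 * v k e)"
        using pK' by (intro sum.cong) (auto simp: l'_def)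
      also have "l' p * v p e = - (\<Sum>k\<in>K'. l k * v k e0 * v p e)"
        by (simp add: l'_def sum_distrib_right)
      finally show ?thesis
        by (simp add: w_def algebra_simps sum_subtractf sum_distrib_left)
    qed
    have "(\<Sum>k\<in>K'. l k * w k e0) = 0" by (simp add: w_def algebra_simps)
    then have "\<forall>e\<in>insert e0 E. (\<Sum>k\<in>K. l' k * v k e) = 0" using eq l(2) by simp
    moreover have "\<exists>k\<in>K. l' k \<noteq> 0"
      using l(1) pK' p unfolding K'_def l'_def by auto
    ultimately show ?thesis by blast
  qed
qed

lemma submodule_min_degree_dvd:
  fixes M :: "('e \<Rightarrow> 'a::field poly) set"
  assumes add: "\<And>p q. p \<in> M \<Longrightarrow> q \<in> M \<Longrightarrow> (\<lambda>e. p e + q e) \<in> M"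
    and smult: "\<And>p c. p \<in> M \<Longrightarrow> (\<lambda>e. c * p e) \<in> M"
    and g: "g \<in> M" "g e0 \<noteq> 0"
    and min: "\<And>p. p \<in> M \<Longrightarrow> p e0 \<noteq> 0 \<Longrightarrow> degree (g e0) \<le> degree (p e0)"
    and p: "p \<in> M"
  shows "g e0 dvd p e0"
proof (rule ccontr)
  assume "\<not> g e0 dvd p e0"
  then have ne: "p e0 mod g e0 \<noteq> 0" by (simp add: mod_eq_0_iff_dvd)
  have "(\<lambda>e. p e + (- (p e0 div g e0)) * g e) \<in> M" using add smult p g(1) by blast
  moreover have "p e0 + (- (p e0 div g e0)) * g e0 = p e0 mod g e0"
    by (metis add_diff_cancel_left' div_mult_mod_eq minus_mult_left diff_conv_add_uminus mult.commute)
  ultimately have "degree (g e0) \<le> degree (p e0 mod g e0)" using min ne by fastforce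
  then show False using degree_mod_less'[OF g(2) ne] by simp
qed

lemma poly_submodule_finitely_generated:
  fixes M :: "('e \<Rightarrow> 'a::field poly) set"
  assumes "finite E"
    and add: "\<And>p q. p \<in> M \<Longrightarrow> q \<in> M \<Longrightarrow> (\<lambda>e. p e + q e) \<in> M"
    and smult: "\<And>p c. p \<in> M \<Longrightarrow> (\<lambda>e. c * p e) \<in> M"
  shows "\<exists>G. finite G \<and> G \<subseteq> M \<and> (\<forall>p\<in>M. \<exists>l. \<forall>e\<in>E. p e = (\<Sum>g\<in>G. l g * g e))"
  using assms
proof (induction E arbitrary: M rule: finite_induct)
  case empty
  then show ?case by (intro exI[of _ "{}"]) auto
next
  case (insert e0 E)
  define K where "K = {p\<in>M. p e0 = 0}"
  have "\<exists>G. finite G \<and> G \<subseteq> K \<and> (\<forall>p\<in>K. \<exists>l. \<forall>e\<in>E. p e = (\<Sum>g\<in>G. l g * g e))"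
    by (rule insert.IH) (auto simp: K_def intro: insert.prems)
  then obtain G where G: "finite G" "G \<subseteq> K" "\<And>p. p\<in>K \<Longrightarrow> \<exists>l. \<forall>e\<in>E. p e = (\<Sum>g\<in>G. l g * g e)"
    by blast
  have G0: "(\<Sum>g\<in>G. l g * g e0) = 0" for l using G(2) unfolding K_def by (auto intro!: sum.neutral)
  show ?case
  proof (cases "\<exists>p\<in>M. p e0 \<noteq> 0")
    case False
    then have "\<exists>l. \<forall>e\<in>insert e0 E. p e = (\<Sum>g\<in>G. l g * g e)" if "p \<in> M" for p
      using G(3)[of p] G0 that unfolding K_def by auto
    then show ?thesis using G(1,2) unfolding K_def by blast
  next
    case True
    then obtain g0 where g0: "g0 \<in> M" "g0 e0 \<noteq> 0"
      and min: "\<And>p. p \<in> M \<Longrightarrow> p e0 \<noteq> 0 \<Longrightarrow> degree (g0 e0) \<le> degree (p e0)"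
      using ex_has_least_nat[of "\<lambda>p. p \<in> M \<and> p e0 \<noteq> 0" _ "\<lambda>p. degree (p e0)"] by blast
    have g0G: "g0 \<notin> G" using g0 G(2) unfolding K_def by auto
    have "\<exists>l. \<forall>e\<in>insert e0 E. p e = (\<Sum>g\<in>insert g0 G. l g * g e)" if p: "p \<in> M" for p
    proof -
      define q where "q = p e0 div g0 e0"
      have "g0 e0 dvd p e0"
        by (rule submodule_min_degree_dvd[where M = M])
          (use insert.prems(1,2) g0 min p in \<open>auto\<close>)
      then have q: "p e0 = q * g0 e0" unfolding q_def by simp
      have "(\<lambda>e. p e + (- q) * g0 e) \<in> M" using insert.prems(1,2) p g0(1) by blast
      then have "(\<lambda>e. p e + (- q) * g0 e) \<in> K" using q unfolding K_def by auto
      then obtain l where l: "\<forall>e\<in>E. p e + (- q) * g0 e = (\<Sum>g\<in>G. l g * g e)" using G(3) by blast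
      have "p e = q * g0 e + (\<Sum>g\<in>G. l g * g e)" if "e \<in> insert e0 E" for e
        using that l q G0[of l] by (auto simp: algebra_simps)
      moreover have "(\<Sum>g\<in>G. (l(g0 := q)) g * g e) = (\<Sum>g\<in>G. l g * g e)" for e
        using g0G by (intro sum.cong) auto
      ultimately show ?thesis using G(1) g0G by (intro exI[of _ "l(g0 := q)"]) simp
    qed
    then show ?thesis using G(1,2) g0(1) unfolding K_def by (intro exI[of _ "insert g0 G"]) auto
  qed
qed

lemma poly_fun_minus: "f \<in> poly_fun \<Longrightarrow> (\<lambda>u. - f u) \<in> poly_fun"
  using poly_fun.pf_mult[OF poly_fun.pf_const[of "-1"]] by simp

lemma poly_fun_diff: "f \<in> poly_fun \<Longrightarrow> g \<in> poly_fun \<Longrightarrow> (\<lambda>u. f u - g u) \<in> poly_fun"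
  using poly_fun.pf_add[OF _ poly_fun_minus, of f g] by simp

lemma poly_fun_prod:
  "finite I \<Longrightarrow> (\<And>i. i \<in> I \<Longrightarrow> f i \<in> poly_fun) \<Longrightarrow> (\<lambda>u. \<Prod>i\<in>I. f i u) \<in> poly_fun"
  by (induction I rule: finite_induct) (auto intro: poly_fun.intros)

lemma poly_fun_power: "f \<in> poly_fun \<Longrightarrow> (\<lambda>u. f u ^ n) \<in> poly_fun"
  by (induction n) (auto intro: poly_fun.intros)

lemma poly_fun_poly: "f \<in> poly_fun \<Longrightarrow> (\<lambda>u. poly c (f u)) \<in> poly_fun"
  by (induction c) (auto intro: poly_fun.intros)

lemma eval2_0 [simp]: "eval2 0 a b = 0"
  unfolding eval2_def by simp

lemma eval2_pCons: "eval2 (pCons c Q) a b = poly c a + b * eval2 Q a b"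
  unfolding eval2_def by (simp add: map_poly_pCons)

lemma eval2_at_0: "eval2 R a 0 = poly (coeff R 0) a"
  by (cases R) (simp add: eval2_pCons)

lemma eval2_eq_sum:
  assumes "degree P \<le> n"
  shows "eval2 P a b = (\<Sum>i\<le>n. poly (coeff P i) a * b ^ i)"
proof -
  have "degree (map_poly (\<lambda>c. poly c a) P) \<le> n"
    using assms map_poly_degree_leq order_trans by blast
  then have "eval2 P a b = (\<Sum>i\<le>n. coeff (map_poly (\<lambda>c. poly c a) P) i * b ^ i)"
    unfolding eval2_def poly_altdef by (intro sum.mono_neutral_left) (auto simp: coeff_eq_0)
  then show ?thesis by (simp add: coeff_map_poly)
qed

lemma poly_fun_eval2:
  "f \<in> poly_fun \<Longrightarrow> g \<in> poly_fun \<Longrightarrow> (\<lambda>u. eval2 Q (f u) (g u)) \<in> poly_fun"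
  by (induction Q) (auto simp: eval2_pCons intro: poly_fun.intros poly_fun_poly)

lemma zariski_closed_zero_set: "S \<subseteq> poly_fun \<Longrightarrow> zariski_closed (zero_set S)"
  unfolding zariski_closed_def by auto

lemma zariski_closed_zeros: "f \<in> poly_fun \<Longrightarrow> zariski_closed {u. f u = 0}"
  unfolding zariski_closed_def zero_set_def by (intro exI[of _ "{f}"]) auto

lemma zariski_closed_Un:
  assumes "zariski_closed A" "zariski_closed B"
  shows "zariski_closed (A \<union> B)"
proof -
  obtain S T where S: "S \<subseteq> poly_fun" "A = zero_set S" and T: "T \<subseteq> poly_fun" "B = zero_set T"
    using assms unfolding zariski_closed_def by blast
  define R where "R = {(\<lambda>u. f u * g u) | f g. f \<in> S \<and> g \<in> T}"
  have "R \<subseteq> poly_fun" unfolding R_def using S T by (auto intro: poly_fun.pf_mult)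
  moreover have "A \<union> B = zero_set R"
  proof
    show "A \<union> B \<subseteq> zero_set R" unfolding R_def S T zero_set_def by auto
    show "zero_set R \<subseteq> A \<union> B"
    proof
      fix u assume u: "u \<in> zero_set R"
      show "u \<in> A \<union> B"
      proof (rule ccontr)
        assume "u \<notin> A \<union> B"
        then obtain f g where "f \<in> S" "f u \<noteq> 0" "g \<in> T" "g u \<noteq> 0"
          unfolding S T zero_set_def by auto
        then have "(\<lambda>u. f u * g u) \<in> R" unfolding R_def by auto
        then show False using u \<open>f u \<noteq> 0\<close> \<open>g u \<noteq> 0\<close> unfolding zero_set_def by auto
      qed
    qed
  qed
  ultimately show ?thesis unfolding zariski_closed_def by auto
qed

lemma zariski_closed_Int: "zariski_closed A \<Longrightarrow> zariski_closed B \<Longrightarrow> zariski_closed (A \<inter> B)"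
  unfolding zariski_closed_def zero_set_def
  by (elim exE conjE, rename_tac S T, rule_tac x="S \<union> T" in exI) auto

lemma zariski_closed_empty: "zariski_closed {}"
  using zariski_closed_zeros[OF poly_fun.pf_const[of 1]] by simp

lemma zariski_closed_singleton: "zariski_closed {p}"
proof -
  have "{p} = zero_set {(\<lambda>u. u i - p i) | i. True}"
  proof (intro equalityI subsetI)
    fix x assume "x \<in> zero_set {(\<lambda>u. u i - p i) | i. True}"
    then have "x i = p i" for i unfolding zero_set_def by auto
    then show "x \<in> {p}" by auto
  qed (auto simp: zero_set_def)
  moreover have "{(\<lambda>u. u i - p i) | i. True} \<subseteq> poly_fun"
    by (auto intro: poly_fun_diff poly_fun.intros)
  ultimately show ?thesis unfolding zariski_closed_def by blast
qed

lemma zariski_closed_finite: "finite A \<Longrightarrow> zariski_closed A"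
proof (induction A rule: finite_induct)
  case (insert a A)
  then show ?case using zariski_closed_Un[OF zariski_closed_singleton] by (metis insert_is_Un)
qed (rule zariski_closed_empty)

lemma zariski_closed_Union:
  "finite C \<Longrightarrow> (\<And>A. A \<in> C \<Longrightarrow> zariski_closed A) \<Longrightarrow> zariski_closed (\<Union>C)"
  by (induction C rule: finite_induct) (auto intro: zariski_closed_empty zariski_closed_Un)

lemma zariski_closure_eq_zero_set:
  "zariski_closure A = zero_set {f \<in> poly_fun. \<forall>u\<in>A. f u = 0}"
proof
  show "zariski_closure A \<subseteq> zero_set {f \<in> poly_fun. \<forall>u\<in>A. f u = 0}"
    unfolding zariski_closure_def
  proof (rule Inter_lower, safe)
    show "zariski_closed (zero_set {f \<in> poly_fun. \<forall>u\<in>A. f u = 0})"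
      by (rule zariski_closed_zero_set) auto
  qed (auto simp: zero_set_def)
  show "zero_set {f \<in> poly_fun. \<forall>u\<in>A. f u = 0} \<subseteq> zariski_closure A"
    unfolding zariski_closure_def zariski_closed_def zero_set_def by blast
qed

lemma zariski_closure_closed: "zariski_closed (zariski_closure A)"
  unfolding zariski_closure_eq_zero_set by (rule zariski_closed_zero_set) auto

lemma zariski_closure_subset: "A \<subseteq> zariski_closure A"
  unfolding zariski_closure_eq_zero_set zero_set_def by auto

lemma zariski_closure_minimal: "A \<subseteq> C \<Longrightarrow> zariski_closed C \<Longrightarrow> zariski_closure A \<subseteq> C"
  unfolding zariski_closure_def by auto

lemma zariski_closure_finite:
  assumes "finite (zariski_closure A)"
  shows "zariski_closure A = A"
proof -
  have "finite A" using assms zariski_closure_subset finite_subset by blast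
  then have "zariski_closure A \<subseteq> A"
    by (intro zariski_closure_minimal[OF subset_refl] zariski_closed_finite)
  then show ?thesis using zariski_closure_subset by blast
qed

lemma zariski_irreducible_Union:
  assumes "zariski_irreducible Y" "finite C" "\<And>A. A \<in> C \<Longrightarrow> zariski_closed A" "Y \<subseteq> \<Union>C"
  shows "\<exists>A\<in>C. Y \<subseteq> A"
  using assms(2,3,4)
proof (induction C rule: finite_induct)
  case empty
  then show ?case using assms(1) unfolding zariski_irreducible_def by auto
next
  case (insert A C)
  have "zariski_closed (\<Union>C)" using insert by (intro zariski_closed_Union) auto
  then have "Y \<subseteq> A \<or> Y \<subseteq> \<Union>C"
    using assms(1) insert.prems unfolding zariski_irreducible_def by auto
  then show ?case using insert by auto
qed

lemma W_var_closed: "zariski_closed (W_var E P)"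
proof -
  have "W_var E P = zero_set {(\<lambda>u. eval2 P (u i) (u j)) | i j. E i j}"
    unfolding W_var_def zero_set_def by auto
  moreover have "{(\<lambda>u. eval2 P (u i) (u j)) | i j. E i j} \<subseteq> poly_fun"
    by (auto intro: poly_fun_eval2 poly_fun.pf_var)
  ultimately show ?thesis unfolding zariski_closed_def by blast
qed

lemma improper_closed: "zariski_closed {u :: 'v::finite \<Rightarrow> complex. improper u}"
proof -
  define D where "D = (\<lambda>u::'v \<Rightarrow> complex. \<Prod>(i, j)\<in>{(i, j). i \<noteq> j}. u i - u j)"
  have "D \<in> poly_fun" unfolding D_def
    by (intro poly_fun_prod) (auto intro: poly_fun_diff poly_fun.pf_var)
  moreover have "{u. improper u} = {u. D u = 0}"
    unfolding D_def improper_def by auto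
  ultimately show ?thesis using zariski_closed_zeros by metis
qed

section \<open>Modules of functions over C[x_i0]\<close>

text \<open>
  Functions are only compared on the set T: span_on T i0 B is the C[x_i0]-module spanned
  by B inside the functions on T, and acts_on_loc_span says that multiplication by f maps
  this module into itself once the polynomial L(x_i0) is inverted.
\<close>

definition span_on :: "('v \<Rightarrow> complex) set \<Rightarrow> 'v \<Rightarrow> (('v \<Rightarrow> complex) \<Rightarrow> complex) set
    \<Rightarrow> (('v \<Rightarrow> complex) \<Rightarrow> complex) set" where
  "span_on T i0 B = {s. \<exists>p. \<forall>u\<in>T. s u = (\<Sum>e\<in>B. poly (p e) (u i0) * e u)}"

definition acts_on_span :: "('v \<Rightarrow> complex) set \<Rightarrow> 'v \<Rightarrow> complex poly
    \<Rightarrow> (('v \<Rightarrow> complex) \<Rightarrow> complex) set \<Rightarrow> nat \<Rightarrow> (('v \<Rightarrow> complex) \<Rightarrow> complex) \<Rightarrow> bool" where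
  "acts_on_span T i0 L B k f \<longleftrightarrow>
     (\<forall>s\<in>span_on T i0 B. (\<lambda>u. poly L (u i0) ^ k * f u * s u) \<in> span_on T i0 B)"

definition acts_on_loc_span :: "('v \<Rightarrow> complex) set \<Rightarrow> 'v \<Rightarrow> complex poly
    \<Rightarrow> (('v \<Rightarrow> complex) \<Rightarrow> complex) set \<Rightarrow> (('v \<Rightarrow> complex) \<Rightarrow> complex) \<Rightarrow> bool" where
  "acts_on_loc_span T i0 L B f \<longleftrightarrow> (\<exists>k. acts_on_span T i0 L B k f)"

lemma span_on_zero: "(\<lambda>u. 0) \<in> span_on T i0 B"
  unfolding span_on_def by (intro CollectI exI[of _ "\<lambda>_. 0"]) simp

lemma span_on_add:
  assumes "s1 \<in> span_on T i0 B" "s2 \<in> span_on T i0 B"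
  shows "(\<lambda>u. s1 u + s2 u) \<in> span_on T i0 B"
proof -
  obtain p1 p2 where "\<forall>u\<in>T. s1 u = (\<Sum>e\<in>B. poly (p1 e) (u i0) * e u)"
    "\<forall>u\<in>T. s2 u = (\<Sum>e\<in>B. poly (p2 e) (u i0) * e u)"
    using assms unfolding span_on_def by blast
  then show ?thesis unfolding span_on_def
    by (intro CollectI exI[of _ "\<lambda>e. p1 e + p2 e"]) (simp add: sum.distrib distrib_right)
qed

lemma span_on_poly_mult:
  assumes "s \<in> span_on T i0 B"
  shows "(\<lambda>u. poly c (u i0) * s u) \<in> span_on T i0 B"
proof -
  obtain p where "\<forall>u\<in>T. s u = (\<Sum>e\<in>B. poly (p e) (u i0) * e u)"
    using assms unfolding span_on_def by blast
  then show ?thesis unfolding span_on_def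
    by (intro CollectI exI[of _ "\<lambda>e. c * p e"]) (simp add: sum_distrib_left mult.assoc)
qed

lemma span_on_cong:
  "s \<in> span_on T i0 B \<Longrightarrow> (\<And>u. u \<in> T \<Longrightarrow> s' u = s u) \<Longrightarrow> s' \<in> span_on T i0 B"
  unfolding span_on_def by auto

lemma span_on_generator:
  assumes "finite B" "e \<in> B"
  shows "e \<in> span_on T i0 B"
  unfolding span_on_def
proof (intro CollectI exI[of _ "\<lambda>e'. if e' = e then 1 else 0"] ballI)
  fix u
  have "(\<Sum>e'\<in>B. poly (if e' = e then 1 else 0) (u i0) * e' u) = (\<Sum>e'\<in>B. if e' = e then e u else 0)"
    by (intro sum.cong) auto
  also have "\<dots> = e u" using assms by simp
  finally show "e u = (\<Sum>e'\<in>B. poly (if e' = e then 1 else 0) (u i0) * e' u)" by simp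
qed

lemma span_on_sum:
  "finite I \<Longrightarrow> (\<And>i. i \<in> I \<Longrightarrow> f i \<in> span_on T i0 B) \<Longrightarrow> (\<lambda>u. \<Sum>i\<in>I. f i u) \<in> span_on T i0 B"
  by (induction I rule: finite_induct) (auto intro: span_on_zero span_on_add)

lemma span_on_subset: "T' \<subseteq> T \<Longrightarrow> s \<in> span_on T i0 B \<Longrightarrow> s \<in> span_on T' i0 B"
  unfolding span_on_def by blast

lemma span_on_mult_generators:
  assumes "finite B" "s \<in> span_on T i0 B"
    and gen: "\<And>e. e \<in> B \<Longrightarrow> (\<lambda>u. g u * e u) \<in> span_on T i0 B'"
  shows "(\<lambda>u. g u * s u) \<in> span_on T i0 B'"
proof -
  obtain p where p: "\<forall>u\<in>T. s u = (\<Sum>e\<in>B. poly (p e) (u i0) * e u)"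
    using assms(2) unfolding span_on_def by auto
  have "(\<lambda>u. \<Sum>e\<in>B. poly (p e) (u i0) * (g u * e u)) \<in> span_on T i0 B'"
    using assms(1) by (intro span_on_sum span_on_poly_mult gen)
  then show ?thesis
    by (rule span_on_cong) (simp add: p sum_distrib_left algebra_simps)
qed

lemma acts_on_spanD:
  "acts_on_span T i0 L B k f \<Longrightarrow> s \<in> span_on T i0 B
    \<Longrightarrow> (\<lambda>u. poly L (u i0) ^ k * f u * s u) \<in> span_on T i0 B"
  unfolding acts_on_span_def by auto

lemma acts_on_span_generators:
  assumes "finite B" "\<And>e. e \<in> B \<Longrightarrow> (\<lambda>u. poly L (u i0) ^ k * f u * e u) \<in> span_on T i0 B"
  shows "acts_on_span T i0 L B k f"
  unfolding acts_on_span_def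
  using span_on_mult_generators[OF assms(1), of _ T i0 "\<lambda>u. poly L (u i0) ^ k * f u"] assms(2)
  by (simp add: mult.assoc)

lemma acts_on_span_exponent_mono:
  assumes "acts_on_span T i0 L B k f" "k \<le> k'"
  shows "acts_on_span T i0 L B k' f"
  unfolding acts_on_span_def
proof
  fix s assume "s \<in> span_on T i0 B"
  then have "(\<lambda>u. poly (L ^ (k' - k)) (u i0) * (poly L (u i0) ^ k * f u * s u)) \<in> span_on T i0 B"
    by (intro span_on_poly_mult acts_on_spanD[OF assms(1)])
  then show "(\<lambda>u. poly L (u i0) ^ k' * f u * s u) \<in> span_on T i0 B"
    by (rule span_on_cong) (simp add: poly_power power_add[symmetric] assms(2) mult.assoc)
qed

lemma acts_on_span_const: "acts_on_span T i0 L B 0 (\<lambda>u. c)"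
  unfolding acts_on_span_def using span_on_poly_mult[of _ T i0 B "[:c:]"] by simp

lemma acts_on_span_var: "acts_on_span T i0 L B 0 (\<lambda>u. u i0)"
  unfolding acts_on_span_def using span_on_poly_mult[of _ T i0 B "[:0, 1:]"] by simp

lemma acts_on_span_add:
  assumes "acts_on_span T i0 L B k f" "acts_on_span T i0 L B k g"
  shows "acts_on_span T i0 L B k (\<lambda>u. f u + g u)"
  unfolding acts_on_span_def
proof
  fix s assume "s \<in> span_on T i0 B"
  then have "(\<lambda>u. poly L (u i0) ^ k * f u * s u + poly L (u i0) ^ k * g u * s u) \<in> span_on T i0 B"
    using assms by (intro span_on_add acts_on_spanD)
  then show "(\<lambda>u. poly L (u i0) ^ k * (f u + g u) * s u) \<in> span_on T i0 B"
    by (rule span_on_cong) (simp add: algebra_simps)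
qed

lemma acts_on_span_mult:
  assumes "acts_on_span T i0 L B k f" "acts_on_span T i0 L B k' g"
  shows "acts_on_span T i0 L B (k + k') (\<lambda>u. f u * g u)"
  unfolding acts_on_span_def
proof
  fix s assume "s \<in> span_on T i0 B"
  then have "(\<lambda>u. poly L (u i0) ^ k * f u * (poly L (u i0) ^ k' * g u * s u)) \<in> span_on T i0 B"
    using assms by (intro acts_on_spanD)
  then show "(\<lambda>u. poly L (u i0) ^ (k + k') * (f u * g u) * s u) \<in> span_on T i0 B"
    by (rule span_on_cong) (simp add: algebra_simps power_add)
qed

lemma acts_on_span_power:
  "acts_on_span T i0 L B k f \<Longrightarrow> acts_on_span T i0 L B (k * j) (\<lambda>u. f u ^ j)"
  by (induction j) (use acts_on_span_const[of T i0 L B 1] acts_on_span_mult in auto)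

lemma acts_on_loc_span_add:
  assumes "acts_on_loc_span T i0 L B f" "acts_on_loc_span T i0 L B g"
  shows "acts_on_loc_span T i0 L B (\<lambda>u. f u + g u)"
proof -
  obtain k k' where "acts_on_span T i0 L B k f" "acts_on_span T i0 L B k' g"
    using assms unfolding acts_on_loc_span_def by blast
  then have "acts_on_span T i0 L B (max k k') f" "acts_on_span T i0 L B (max k k') g"
    by (auto intro: acts_on_span_exponent_mono)
  then show ?thesis unfolding acts_on_loc_span_def by (blast intro: acts_on_span_add)
qed

lemma acts_on_loc_span_mult:
  "acts_on_loc_span T i0 L B f \<Longrightarrow> acts_on_loc_span T i0 L B g
    \<Longrightarrow> acts_on_loc_span T i0 L B (\<lambda>u. f u * g u)"
  unfolding acts_on_loc_span_def by (blast intro: acts_on_span_mult)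

lemma acts_on_loc_span_const: "acts_on_loc_span T i0 L B (\<lambda>u. c)"
  unfolding acts_on_loc_span_def by (blast intro: acts_on_span_const)

lemma acts_on_loc_span_poly:
  "acts_on_loc_span T i0 L B h \<Longrightarrow> acts_on_loc_span T i0 L B (\<lambda>u. poly c (h u))"
  by (induction c) (auto intro: acts_on_loc_span_add acts_on_loc_span_mult acts_on_loc_span_const)

lemma acts_on_loc_span_eval2:
  assumes "acts_on_loc_span T i0 L B h"
  shows "acts_on_loc_span T i0 L B (\<lambda>u. eval2 Q (u i0) (h u))"
proof (induction Q)
  case 0
  then show ?case using acts_on_loc_span_const[of T i0 L B 0] by simp
next
  case (pCons a Q)
  have "acts_on_loc_span T i0 L B (\<lambda>u. u i0)"
    unfolding acts_on_loc_span_def by (blast intro: acts_on_span_var)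
  then have "acts_on_loc_span T i0 L B (\<lambda>u. poly a (u i0) + h u * eval2 Q (u i0) (h u))"
    using assms pCons by (intro acts_on_loc_span_add acts_on_loc_span_mult acts_on_loc_span_poly)
  then show ?case by (simp add: eval2_pCons)
qed

lemma acts_on_loc_span_poly_fun:
  "f \<in> poly_fun \<Longrightarrow> (\<And>j. acts_on_loc_span T i0 L B (\<lambda>u. u j)) \<Longrightarrow> acts_on_loc_span T i0 L B f"
  by (induction f rule: poly_fun.induct)
    (auto intro: acts_on_loc_span_const acts_on_loc_span_add acts_on_loc_span_mult)

lemma acts_on_loc_span_subset:
  assumes "acts_on_loc_span T i0 L B f" "T' \<subseteq> T"
  shows "acts_on_loc_span T' i0 L B f"
proof -
  obtain k where k: "acts_on_span T i0 L B k f" using assms(1) unfolding acts_on_loc_span_def by blast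
  have "acts_on_span T' i0 L B k f"
    unfolding acts_on_span_def
  proof
    fix s assume "s \<in> span_on T' i0 B"
    then obtain p where p: "\<forall>u\<in>T'. s u = (\<Sum>e\<in>B. poly (p e) (u i0) * e u)"
      unfolding span_on_def by auto
    define s0 where "s0 = (\<lambda>u. \<Sum>e\<in>B. poly (p e) (u i0) * e u)"
    have "s0 \<in> span_on T i0 B" unfolding span_on_def s0_def by blast
    then have "(\<lambda>u. poly L (u i0) ^ k * f u * s0 u) \<in> span_on T' i0 B"
      by (intro span_on_subset[OF assms(2)] acts_on_spanD[OF k])
    then show "(\<lambda>u. poly L (u i0) ^ k * f u * s u) \<in> span_on T' i0 B"
      by (rule span_on_cong) (simp add: p s0_def)
  qed
  then show ?thesis unfolding acts_on_loc_span_def by blast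
qed

lemma acts_on_loc_span_common_exponent:
  assumes "finite I" "\<And>i. i \<in> I \<Longrightarrow> acts_on_loc_span T i0 L B (f i)"
  shows "\<exists>k. \<forall>i\<in>I. acts_on_span T i0 L B k (f i)"
  using assms
proof (induction I rule: finite_induct)
  case (insert a I)
  then obtain k where "\<forall>i\<in>I. acts_on_span T i0 L B k (f i)" by auto
  moreover obtain k' where "acts_on_span T i0 L B k' (f a)"
    using insert.prems unfolding acts_on_loc_span_def by auto
  ultimately show ?case by (intro exI[of _ "max k k'"]) (auto intro: acts_on_span_exponent_mono)
qed simp

text \<open>
  The card B + 1 functions L(x_i0)^(k j) f^j, j \<le> card B, lie in the span of B, so they
  are linearly dependent over C[x_i0].
\<close>
lemma span_on_algebraic_relation:
  assumes fin: "finite B" and L: "L \<noteq> 0" and one: "(\<lambda>u. 1) \<in> span_on T i0 B"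
    and f: "acts_on_loc_span T i0 L B f"
  shows "\<exists>R. R \<noteq> 0 \<and> (\<forall>u\<in>T. eval2 R (u i0) (f u) = 0)"
proof -
  obtain k where k: "acts_on_span T i0 L B k f" using f unfolding acts_on_loc_span_def by auto
  have "\<forall>j. \<exists>p. \<forall>u\<in>T. poly L (u i0) ^ (k * j) * f u ^ j = (\<Sum>e\<in>B. poly (p e) (u i0) * e u)"
    using acts_on_spanD[OF acts_on_span_power[OF k] one] unfolding span_on_def by simp
  from choice[OF this] obtain P where P: "\<And>j u. u \<in> T \<Longrightarrow>
      poly L (u i0) ^ (k * j) * f u ^ j = (\<Sum>e\<in>B. poly (P j e) (u i0) * e u)"
    by blast
  define m where "m = card B"
  obtain l where l: "\<exists>j\<in>{..m}. l j \<noteq> 0" "\<forall>e\<in>B. (\<Sum>j\<in>{..m}. l j * P j e) = 0"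
    using nontrivial_linear_relation[OF fin _, of "{..m}" P] unfolding m_def by auto
  define R where "R = (\<Sum>j\<le>m. monom (l j * L ^ (k * j)) j)"
  have cR: "coeff R i = (if i \<le> m then l i * L ^ (k * i) else 0)" for i
    unfolding R_def by (simp add: coeff_sum coeff_monom)
  have "R \<noteq> 0"
  proof -
    from l(1) obtain j where "j \<le> m" "l j \<noteq> 0" by auto
    then have "coeff R j \<noteq> 0" using L unfolding cR by auto
    then show ?thesis by auto
  qed
  moreover have "eval2 R (u i0) (f u) = 0" if u: "u \<in> T" for u
  proof -
    have "degree R \<le> m" by (rule degree_le) (auto simp: cR)
    then have "eval2 R (u i0) (f u) = (\<Sum>j\<le>m. poly (l j) (u i0) * (poly L (u i0) ^ (k * j) * f u ^ j))"
      unfolding eval2_eq_sum[OF \<open>degree R \<le> m\<close>] by (intro sum.cong) (simp_all add: cR poly_power mult.assoc)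
    also have "\<dots> = (\<Sum>j\<le>m. \<Sum>e\<in>B. poly (l j) (u i0) * (poly (P j e) (u i0) * e u))"
      by (simp add: P[OF u] sum_distrib_left)
    also have "\<dots> = (\<Sum>e\<in>B. poly (\<Sum>j\<le>m. l j * P j e) (u i0) * e u)"
      by (subst sum.swap) (simp add: poly_sum sum_distrib_right mult.assoc)
    also have "\<dots> = 0" using l(2) by simp
    finally show ?thesis .
  qed
  ultimately show ?thesis by blast
qed

definition extend_by_powers :: "(('v \<Rightarrow> complex) \<Rightarrow> complex) set \<Rightarrow> (('v \<Rightarrow> complex) \<Rightarrow> complex)
    \<Rightarrow> nat \<Rightarrow> (('v \<Rightarrow> complex) \<Rightarrow> complex) set" where
  "extend_by_powers B g k = (\<lambda>(e, b) u. e u * g u ^ b) ` (B \<times> {..<k})"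

lemma finite_extend_by_powers: "finite B \<Longrightarrow> finite (extend_by_powers B g k)"
  unfolding extend_by_powers_def by simp

lemma extend_by_powers_poly_fun:
  "B \<subseteq> poly_fun \<Longrightarrow> g \<in> poly_fun \<Longrightarrow> extend_by_powers B g k \<subseteq> poly_fun"
  unfolding extend_by_powers_def by (auto intro!: poly_fun.pf_mult poly_fun_power)

lemma span_on_extend_by_powers:
  assumes "finite B" "s \<in> span_on T i0 B" "b < k"
  shows "(\<lambda>u. g u ^ b * s u) \<in> span_on T i0 (extend_by_powers B g k)"
proof (rule span_on_mult_generators[OF assms(1,2)])
  fix e assume "e \<in> B"
  then have "(\<lambda>u. e u * g u ^ b) \<in> extend_by_powers B g k"
    unfolding extend_by_powers_def using assms(3) by force
  then have "(\<lambda>u. e u * g u ^ b) \<in> span_on T i0 (extend_by_powers B g k)"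
    by (rule span_on_generator[OF finite_extend_by_powers[OF assms(1)]])
  then show "(\<lambda>u. g u ^ b * e u) \<in> span_on T i0 (extend_by_powers B g k)"
    by (rule span_on_cong) (simp add: mult.commute)
qed

lemma acts_on_loc_span_extend_by_powers:
  assumes fin: "finite B" and h: "acts_on_loc_span T i0 L B h"
  shows "acts_on_loc_span T i0 (L * c) (extend_by_powers B g k) h"
proof -
  obtain j where j: "acts_on_span T i0 L B j h" using h unfolding acts_on_loc_span_def by blast
  have "acts_on_span T i0 (L * c) (extend_by_powers B g k) j h"
  proof (rule acts_on_span_generators[OF finite_extend_by_powers[OF fin]])
    fix e' assume "e' \<in> extend_by_powers B g k"
    then obtain e b where e: "e \<in> B" "b < k" "e' = (\<lambda>u. e u * g u ^ b)"
      unfolding extend_by_powers_def by auto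
    have "(\<lambda>u. poly L (u i0) ^ j * h u * e u) \<in> span_on T i0 B"
      by (rule acts_on_spanD[OF j span_on_generator[OF fin e(1)]])
    from span_on_extend_by_powers[OF fin this e(2)]
    have "(\<lambda>u. poly (c ^ j) (u i0) * (g u ^ b * (poly L (u i0) ^ j * h u * e u)))
        \<in> span_on T i0 (extend_by_powers B g k)"
      by (rule span_on_poly_mult)
    then show "(\<lambda>u. poly (L * c) (u i0) ^ j * h u * e' u) \<in> span_on T i0 (extend_by_powers B g k)"
      by (rule span_on_cong) (simp add: e(3) poly_power power_mult_distrib mult_ac)
  qed
  then show ?thesis unfolding acts_on_loc_span_def by blast
qed

text \<open>
  Here g is a root of q y^k + \<Sigma>_{i<k} a_i y^i and q is invertible up to c(x_i0):
  multiplying the relation by \<psi> expresses c(x_i0) g^k through lower powers of g.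
\<close>
lemma span_on_reduce_top_power:
  assumes fin: "finite B" and e: "e \<in> span_on T i0 B"
    and unit: "\<And>u. u \<in> T \<Longrightarrow> poly c (u i0) + q u * \<psi> u = 0"
    and root: "\<And>u. u \<in> T \<Longrightarrow> q u * g u ^ k + (\<Sum>i<k. a i u * g u ^ i) = 0"
    and a: "\<And>i. i < k \<Longrightarrow> acts_on_span T i0 L B K (a i)" and \<psi>: "acts_on_span T i0 L B K \<psi>"
  shows "(\<lambda>u. poly (L ^ (2 * K) * c) (u i0) * g u ^ k * e u) \<in> span_on T i0 (extend_by_powers B g k)"
proof -
  define s where "s = (\<lambda>i u. poly L (u i0) ^ K * \<psi> u * (poly L (u i0) ^ K * a i u * e u))"
  have "s i \<in> span_on T i0 B" if "i < k" for i
    unfolding s_def by (intro acts_on_spanD[OF \<psi>] acts_on_spanD[OF a[OF that]] e)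
  then have "(\<lambda>u. \<Sum>i<k. g u ^ i * s i u) \<in> span_on T i0 (extend_by_powers B g k)"
    by (intro span_on_sum span_on_extend_by_powers[OF fin]) auto
  then show ?thesis
  proof (rule span_on_cong)
    fix u assume u: "u \<in> T"
    define X where "X = poly L (u i0)"
    have S: "(\<Sum>i<k. a i u * g u ^ i) = - (q u * g u ^ k)"
      using root[OF u] by (simp add: eq_neg_iff_add_eq_0 add.commute)
    have C: "poly c (u i0) = - (q u * \<psi> u)"
      using unit[OF u] by (simp add: eq_neg_iff_add_eq_0)
    have "(\<Sum>i<k. g u ^ i * s i u) = X ^ K * X ^ K * \<psi> u * e u * (\<Sum>i<k. a i u * g u ^ i)"
      unfolding s_def X_def by (simp add: sum_distrib_left mult_ac)
    also have "\<dots> = X ^ K * X ^ K * poly c (u i0) * e u * g u ^ k"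
      unfolding S C by (simp add: mult_ac)
    also have "X ^ K * X ^ K = poly (L ^ (2 * K)) (u i0)"
      unfolding X_def by (simp add: poly_power mult_2 power_add)
    finally show "poly (L ^ (2 * K) * c) (u i0) * g u ^ k * e u = (\<Sum>i<k. g u ^ i * s i u)"
      by (simp add: mult_ac)
  qed
qed

lemma acts_on_loc_span_root:
  assumes fin: "finite B"
    and unit: "\<And>u. u \<in> T \<Longrightarrow> poly c (u i0) + q u * \<psi> u = 0"
    and root: "\<And>u. u \<in> T \<Longrightarrow> q u * g u ^ k + (\<Sum>i<k. a i u * g u ^ i) = 0"
    and a: "\<And>i. i < k \<Longrightarrow> acts_on_loc_span T i0 L B (a i)"
    and \<psi>: "acts_on_loc_span T i0 L B \<psi>"
  shows "acts_on_loc_span T i0 (L * c) (extend_by_powers B g k) g"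
proof -
  let ?B' = "extend_by_powers B g k"
  obtain K1 where K1: "\<forall>i\<in>{..<k}. acts_on_span T i0 L B K1 (a i)"
    using acts_on_loc_span_common_exponent[of "{..<k}" T i0 L B a] a by auto
  obtain K2 where K2: "acts_on_span T i0 L B K2 \<psi>" using \<psi> unfolding acts_on_loc_span_def by blast
  define K where "K = max K1 K2"
  have Ka: "acts_on_span T i0 L B K (a i)" if "i < k" for i
    using K1 that acts_on_span_exponent_mono[of T i0 L B K1 _ K] unfolding K_def by auto
  have K\<psi>: "acts_on_span T i0 L B K \<psi>"
    using acts_on_span_exponent_mono[OF K2, of K] unfolding K_def by auto
  have "acts_on_span T i0 (L * c) ?B' (2 * K + 1) g"
  proof (rule acts_on_span_generators[OF finite_extend_by_powers[OF fin]])
    fix e' assume "e' \<in> ?B'"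
    then obtain e b where e: "e \<in> B" "b < k" "e' = (\<lambda>u. e u * g u ^ b)"
      unfolding extend_by_powers_def by auto
    have eB: "e \<in> span_on T i0 B" by (rule span_on_generator[OF fin e(1)])
    show "(\<lambda>u. poly (L * c) (u i0) ^ (2 * K + 1) * g u * e' u) \<in> span_on T i0 ?B'"
    proof (cases "b + 1 < k")
      case True
      from span_on_extend_by_powers[OF fin eB True]
      have "(\<lambda>u. poly ((L * c) ^ (2 * K + 1)) (u i0) * (g u ^ (b + 1) * e u)) \<in> span_on T i0 ?B'"
        by (rule span_on_poly_mult)
      then show ?thesis by (rule span_on_cong) (simp add: e(3) poly_power mult_ac)
    next
      case False
      then have "k = Suc b" using e(2) by auto
      from span_on_reduce_top_power[OF fin eB unit root Ka K\<psi>]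
      have "(\<lambda>u. poly (L * c ^ (2 * K)) (u i0) * (poly (L ^ (2 * K) * c) (u i0) * g u ^ k * e u))
          \<in> span_on T i0 ?B'"
        by (rule span_on_poly_mult)
      then show ?thesis
        by (rule span_on_cong) (simp add: e(3) \<open>k = Suc b\<close> poly_power power_mult_distrib mult_ac)
    qed
  qed
  then show ?thesis unfolding acts_on_loc_span_def by blast
qed

section \<open>Prime filters on W\<close>

lemma rtranclp_exits:
  assumes "R\<^sup>*\<^sup>* a b" "a \<in> S" "b \<notin> S"
  shows "\<exists>v w. v \<in> S \<and> w \<notin> S \<and> R v w"
  using assms by (induction rule: rtranclp_induct) auto

text \<open>
  F stands for the generic points of an irreducible part of W: a filter of subsets
  containing W in which the zero set of a product is large only if the zero set of a
  factor is.  The instances used are {X. Y \<subseteq> X} for an irreducible Y \<subseteq> W, and free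
  ultrafilters containing W.
\<close>
locale W_prime_filter =
  fixes E :: "'v::finite \<Rightarrow> 'v \<Rightarrow> bool" and \<Phi> :: "complex poly poly" and i0 :: 'v
    and F :: "('v \<Rightarrow> complex) set set"
  assumes connected_from_i0: "\<And>j. E\<^sup>*\<^sup>* i0 j"
    and fibres_nonzero: "\<And>a. map_poly (\<lambda>c. poly c a) \<Phi> \<noteq> 0"
    and F_mono: "\<And>X X'. X \<in> F \<Longrightarrow> X \<subseteq> X' \<Longrightarrow> X' \<in> F"
    and F_Int: "\<And>X X'. X \<in> F \<Longrightarrow> X' \<in> F \<Longrightarrow> X \<inter> X' \<in> F"
    and W_in_F: "W_var E \<Phi> \<in> F"
    and empty_notin_F: "{} \<notin> F"
    and F_prime: "\<And>f g. f \<in> poly_fun \<Longrightarrow> g \<in> poly_fun \<Longrightarrow> {u. f u * g u = 0} \<in> F \<Longrightarrow>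
                    {u. f u = 0} \<in> F \<or> {u. g u = 0} \<in> F"
begin

abbreviation "W \<equiv> W_var E \<Phi>"

lemma W_Int_INT_in_F:
  assumes "finite I" "\<And>i. i \<in> I \<Longrightarrow> X i \<in> F"
  shows "W \<inter> (\<Inter>i\<in>I. X i) \<in> F"
  using assms
proof (induction I rule: finite_induct)
  case (insert a I)
  have "W \<inter> (\<Inter>i\<in>insert a I. X i) = X a \<inter> (W \<inter> (\<Inter>i\<in>I. X i))" by auto
  then show ?case using insert F_Int by auto
qed (simp add: W_in_F)

text \<open>As F is prime and f is not generically zero, factors y can be cancelled from R.\<close>
lemma relation_nonzero_constant:
  assumes "f \<in> poly_fun" "{u. f u = 0} \<notin> F" "R \<noteq> 0" "{u. eval2 R (u i0) (f u) = 0} \<in> F"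
  shows "\<exists>R'. coeff R' 0 \<noteq> 0 \<and> {u. eval2 R' (u i0) (f u) = 0} \<in> F"
  using assms(3,4)
proof (induction "degree R" arbitrary: R rule: less_induct)
  case less
  show ?case
  proof (cases "coeff R 0 = 0")
    case True
    then obtain Q where R: "R = pCons 0 Q" by (cases R) auto
    then have "Q \<noteq> 0" "degree Q < degree R" using less.prems(1) by auto
    have "{u. f u * eval2 Q (u i0) (f u) = 0} \<in> F"
      using less.prems(2) unfolding R by (simp add: eval2_pCons)
    then have "{u. eval2 Q (u i0) (f u) = 0} \<in> F"
      using F_prime[OF assms(1) poly_fun_eval2[OF poly_fun.pf_var assms(1)]] assms(2) by blast
    then show ?thesis using less.hyps \<open>degree Q < degree R\<close> \<open>Q \<noteq> 0\<close> by blast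
  qed (use less.prems in blast)
qed

text \<open>
  The coordinates indexed by S generate, on the large set T, a module over C[x_i0, 1/L]
  with the finite set of generators B.
\<close>
definition finite_frame :: "('v \<Rightarrow> complex) set \<Rightarrow> complex poly \<Rightarrow> (('v \<Rightarrow> complex) \<Rightarrow> complex) set
    \<Rightarrow> 'v set \<Rightarrow> bool" where
  "finite_frame T L B S \<longleftrightarrow> T \<in> F \<and> T \<subseteq> W \<and> L \<noteq> 0 \<and> finite B \<and> B \<subseteq> poly_fun \<and>
     (\<lambda>u. 1) \<in> span_on T i0 B \<and> (\<forall>j\<in>S. acts_on_loc_span T i0 L B (\<lambda>u. u j))"

lemma finite_frame_relation_nonzero_constant:
  assumes frame: "finite_frame T L B S" and "acts_on_loc_span T i0 L B f"
    and "f \<in> poly_fun" "{u. f u = 0} \<notin> F"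
  shows "\<exists>R. coeff R 0 \<noteq> 0 \<and> {u. eval2 R (u i0) (f u) = 0} \<in> F"
proof -
  have T: "T \<in> F" and B: "finite B" and L: "L \<noteq> 0" and one: "(\<lambda>u. 1) \<in> span_on T i0 B"
    using frame unfolding finite_frame_def by auto
  obtain R where "R \<noteq> 0" and "\<forall>u\<in>T. eval2 R (u i0) (f u) = 0"
    using span_on_algebraic_relation[OF B L one assms(2)] by blast
  then have "T \<subseteq> {u. eval2 R (u i0) (f u) = 0}" by auto
  then have "{u. eval2 R (u i0) (f u) = 0} \<in> F" using F_mono T by blast
  then show ?thesis using relation_nonzero_constant[OF assms(3,4) \<open>R \<noteq> 0\<close>] by blast
qed

text \<open>
  A function acting on a frame and not vanishing generically is invertible up to a
  nonzero polynomial c(x_i0): take its relation R with R(x, 0) = c \<noteq> 0.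
\<close>
lemma finite_frame_quasi_inverse:
  assumes frame: "finite_frame T L B S" and f: "acts_on_loc_span T i0 L B f" "f \<in> poly_fun"
    and "{u. f u = 0} \<notin> F"
  obtains c \<psi> where "c \<noteq> 0" "{u. poly c (u i0) + f u * \<psi> u = 0} \<in> F"
    "acts_on_loc_span T i0 L B \<psi>"
proof -
  obtain R where R0: "coeff R 0 \<noteq> 0" and RF: "{u. eval2 R (u i0) (f u) = 0} \<in> F"
    using finite_frame_relation_nonzero_constant[OF assms] by blast
  obtain c Q where R: "R = pCons c Q" by (cases R)
  show ?thesis
  proof (rule that)
    show "c \<noteq> 0" using R0 R by simp
    show "{u. poly c (u i0) + f u * eval2 Q (u i0) (f u) = 0} \<in> F"
      using RF unfolding R by (simp add: eval2_pCons)
    show "acts_on_loc_span T i0 L B (\<lambda>u. eval2 Q (u i0) (f u))"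
      by (rule acts_on_loc_span_eval2[OF f(1)])
  qed
qed

lemma coefficient_not_generically_zero: "\<exists>i\<le>degree \<Phi>. {u. poly (coeff \<Phi> i) (u v) = 0} \<notin> F"
proof (rule ccontr)
  assume "\<not> ?thesis"
  then have "W \<inter> (\<Inter>i\<in>{..degree \<Phi>}. {u. poly (coeff \<Phi> i) (u v) = 0}) \<in> F"
    by (intro W_Int_INT_in_F) auto
  then have "W \<inter> (\<Inter>i\<in>{..degree \<Phi>}. {u. poly (coeff \<Phi> i) (u v) = 0}) \<noteq> {}"
    using empty_notin_F by metis
  then obtain u where u: "\<And>i. i \<le> degree \<Phi> \<Longrightarrow> poly (coeff \<Phi> i) (u v) = 0" by blast
  have "coeff (map_poly (\<lambda>c. poly c (u v)) \<Phi>) i = 0" for i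
    using u[of i] by (cases "i \<le> degree \<Phi>") (auto simp: coeff_map_poly coeff_eq_0)
  then have "map_poly (\<lambda>c. poly c (u v)) \<Phi> = 0" by (intro poly_eqI) simp
  with fibres_nonzero show False by blast
qed

text \<open>
  For an edge v w, the relation \<Phi>(x_v, x_w) = 0 is truncated at the largest k whose
  coefficient does not vanish generically; k = 0 is impossible since the truncated
  relation would then make this coefficient vanish on a large set.
\<close>
lemma neighbour_relation:
  assumes "E v w"
  obtains k T1 where "0 < k" "T1 \<in> F" "{u. poly (coeff \<Phi> k) (u v) = 0} \<notin> F"
    "\<And>u. u \<in> T1 \<Longrightarrow> (\<Sum>i\<le>k. poly (coeff \<Phi> i) (u v) * u w ^ i) = 0"
proof -
  define \<phi> where "\<phi> = (\<lambda>i u. poly (coeff \<Phi> i) (u v))"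
  define N where "N = {i. i \<le> degree \<Phi> \<and> {u. \<phi> i u = 0} \<notin> F}"
  define k where "k = Max N"
  have "finite N" "N \<noteq> {}"
    using coefficient_not_generically_zero[of v] unfolding N_def \<phi>_def by auto
  then have kN: "k \<in> N" and le_k: "\<And>i. i \<in> N \<Longrightarrow> i \<le> k" unfolding k_def by auto
  define T1 where "T1 = W \<inter> (\<Inter>i\<in>{k<..degree \<Phi>}. {u. \<phi> i u = 0})"
  have "{u. \<phi> i u = 0} \<in> F" if "i \<in> {k<..degree \<Phi>}" for i
    using le_k[of i] that unfolding N_def by force
  then have T1: "T1 \<in> F" unfolding T1_def by (intro W_Int_INT_in_F) auto
  have root: "(\<Sum>i\<le>k. \<phi> i u * u w ^ i) = 0" if u: "u \<in> T1" for u
  proof -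
    have "0 = eval2 \<Phi> (u v) (u w)" using u \<open>E v w\<close> unfolding T1_def W_var_def by auto
    also have "\<dots> = (\<Sum>i\<le>degree \<Phi>. \<phi> i u * u w ^ i)"
      unfolding eval2_eq_sum[OF order_refl] \<phi>_def ..
    also have "{..degree \<Phi>} = {..k} \<union> {k<..degree \<Phi>}" using kN unfolding N_def by auto
    also have "(\<Sum>i\<in>{..k} \<union> {k<..degree \<Phi>}. \<phi> i u * u w ^ i) =
        (\<Sum>i\<le>k. \<phi> i u * u w ^ i) + (\<Sum>i\<in>{k<..degree \<Phi>}. \<phi> i u * u w ^ i)"
      by (rule sum.union_disjoint) auto
    also have "(\<Sum>i\<in>{k<..degree \<Phi>}. \<phi> i u * u w ^ i) = 0" using u unfolding T1_def by simp
    finally show ?thesis by simp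
  qed
  have "0 < k"
  proof (rule ccontr)
    assume "\<not> 0 < k"
    then have "T1 \<subseteq> {u. \<phi> 0 u = 0}" using root by auto
    then show False using kN T1 F_mono \<open>\<not> 0 < k\<close> unfolding N_def by auto
  qed
  then show ?thesis using that T1 kN root unfolding N_def \<phi>_def by blast
qed

lemma finite_frame_adjoin_root:
  assumes frame: "finite_frame T L B S" and T': "T' \<in> F" "T' \<subseteq> T" and "0 < k" "c \<noteq> 0"
    and unit: "\<And>u. u \<in> T' \<Longrightarrow> poly c (u i0) + q u * \<psi> u = 0"
    and root: "\<And>u. u \<in> T' \<Longrightarrow> q u * u w ^ k + (\<Sum>i<k. a i u * u w ^ i) = 0"
    and a: "\<And>i. i < k \<Longrightarrow> acts_on_loc_span T i0 L B (a i)" and \<psi>: "acts_on_loc_span T i0 L B \<psi>"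
  shows "finite_frame T' (L * c) (extend_by_powers B (\<lambda>u. u w) k) (insert w S)"
  unfolding finite_frame_def
proof (intro conjI ballI)
  have T: "T \<subseteq> W" and L: "L \<noteq> 0" and B: "finite B" "B \<subseteq> poly_fun"
    and one: "(\<lambda>u. 1) \<in> span_on T i0 B"
    and S: "\<And>j. j \<in> S \<Longrightarrow> acts_on_loc_span T i0 L B (\<lambda>u. u j)"
    using frame unfolding finite_frame_def by auto
  let ?B' = "extend_by_powers B (\<lambda>u. u w) k"
  show "T' \<in> F" "T' \<subseteq> W" using T' T by auto
  show "L * c \<noteq> 0" using L \<open>c \<noteq> 0\<close> by simp
  show "finite ?B'" using B(1) by (rule finite_extend_by_powers)
  show "?B' \<subseteq> poly_fun" using B(2) poly_fun.pf_var by (rule extend_by_powers_poly_fun)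
  show "(\<lambda>u. 1) \<in> span_on T' i0 ?B'"
    using span_on_extend_by_powers[OF B(1) span_on_subset[OF T'(2) one] \<open>0 < k\<close>] by simp
  fix j assume "j \<in> insert w S"
  then show "acts_on_loc_span T' i0 (L * c) ?B' (\<lambda>u. u j)"
  proof
    assume "j = w"
    show ?thesis unfolding \<open>j = w\<close>
      by (rule acts_on_loc_span_root[OF B(1) unit root
          acts_on_loc_span_subset[OF a T'(2)] acts_on_loc_span_subset[OF \<psi> T'(2)]])
  next
    assume "j \<in> S"
    show ?thesis
      by (rule acts_on_loc_span_extend_by_powers[OF B(1) acts_on_loc_span_subset[OF S[OF \<open>j \<in> S\<close>] T'(2)]])
  qed
qed

lemma finite_frame_extend:
  assumes frame: "finite_frame T L B S" and "v \<in> S" "E v w"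
  shows "\<exists>T' L' B'. finite_frame T' L' B' (insert w S)"
proof -
  obtain k T1 where k: "0 < k" and T1: "T1 \<in> F"
    and q_generic: "{u. poly (coeff \<Phi> k) (u v) = 0} \<notin> F"
    and root: "\<And>u. u \<in> T1 \<Longrightarrow> (\<Sum>i\<le>k. poly (coeff \<Phi> i) (u v) * u w ^ i) = 0"
    using neighbour_relation[OF \<open>E v w\<close>] by blast
  define a where "a = (\<lambda>i u. poly (coeff \<Phi> i) (u v))"
  have "acts_on_loc_span T i0 L B (\<lambda>u. u v)" using frame \<open>v \<in> S\<close> unfolding finite_frame_def by blast
  then have a_acts: "acts_on_loc_span T i0 L B (a i)" for i
    unfolding a_def by (rule acts_on_loc_span_poly)
  have "a k \<in> poly_fun" unfolding a_def by (intro poly_fun_poly poly_fun.pf_var)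
  moreover have "{u. a k u = 0} \<notin> F" using q_generic unfolding a_def .
  ultimately obtain c \<psi> where c: "c \<noteq> 0" and T2: "{u. poly c (u i0) + a k u * \<psi> u = 0} \<in> F"
    and \<psi>_acts: "acts_on_loc_span T i0 L B \<psi>"
    by (rule finite_frame_quasi_inverse[OF frame a_acts])
  define T' where "T' = T \<inter> T1 \<inter> {u. poly c (u i0) + a k u * \<psi> u = 0}"
  have "T \<in> F" using frame unfolding finite_frame_def by blast
  then have "T' \<in> F" unfolding T'_def using T1 T2 F_Int by blast
  moreover have "a k u * u w ^ k + (\<Sum>i<k. a i u * u w ^ i) = 0" if "u \<in> T'" for u
    using root[of u] that unfolding T'_def a_def
    by (simp add: lessThan_Suc_atMost[symmetric] add.commute)
  ultimately have "finite_frame T' (L * c) (extend_by_powers B (\<lambda>u. u w) k) (insert w S)"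
    by (intro finite_frame_adjoin_root[where a = a, OF frame _ _ k c _ _ a_acts \<psi>_acts])
      (auto simp: T'_def)
  then show ?thesis by blast
qed

lemma finite_frame_base: "finite_frame W 1 {\<lambda>u. 1} {i0}"
proof -
  have "(\<lambda>u. 1) \<in> span_on W i0 {\<lambda>u. 1}" by (rule span_on_generator) auto
  then show ?thesis unfolding finite_frame_def acts_on_loc_span_def
    using W_in_F by (auto intro!: exI[of _ 0] acts_on_span_var poly_fun.pf_const)
qed

lemma finite_frame_exists: "\<exists>T L B. finite_frame T L B UNIV"
proof -
  have "\<exists>S T L B. finite_frame T L B S \<and> i0 \<in> S \<and> n \<le> card S" if "n \<le> card (UNIV :: 'v set)" for n
    using that
  proof (induction n)
    case 0
    show ?case using finite_frame_base by (intro exI[of _ "{i0}"]) blast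
  next
    case (Suc n)
    then obtain S T L B where frame: "finite_frame T L B S" "i0 \<in> S" "n \<le> card S" by auto
    show ?case
    proof (cases "S = UNIV")
      case True
      then have "Suc n \<le> card S" using Suc.prems by simp
      then show ?thesis using frame by blast
    next
      case False
      then obtain w0 where "w0 \<notin> S" by auto
      then obtain v w where "v \<in> S" "w \<notin> S" "E v w"
        using rtranclp_exits[OF connected_from_i0[of w0] frame(2)] by blast
      with finite_frame_extend[OF frame(1)] obtain T' L' B' where
        "finite_frame T' L' B' (insert w S)" by blast
      moreover have "card (insert w S) = Suc (card S)" using \<open>w \<notin> S\<close> by simp
      ultimately show ?thesis using frame(2,3) by (intro exI[of _ "insert w S"]) auto
    qed
  qed
  then obtain S T L B where frame: "finite_frame T L B S" "card (UNIV :: 'v set) \<le> card S" by blast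
  then have "S = UNIV" by (intro card_seteq) auto
  then show ?thesis using frame by blast
qed

lemma finite_frame_UNIV_acts:
  "finite_frame T L B UNIV \<Longrightarrow> f \<in> poly_fun \<Longrightarrow> acts_on_loc_span T i0 L B f"
  unfolding finite_frame_def by (auto intro: acts_on_loc_span_poly_fun)

lemma algebraic_relation_nonzero_constant:
  assumes "f \<in> poly_fun" "{u. f u = 0} \<notin> F"
  shows "\<exists>R. coeff R 0 \<noteq> 0 \<and> {u. eval2 R (u i0) (f u) = 0} \<in> F"
proof -
  obtain T L B where frame: "finite_frame T L B UNIV" using finite_frame_exists by blast
  show ?thesis
    by (rule finite_frame_relation_nonzero_constant[OF frame finite_frame_UNIV_acts[OF frame assms(1)] assms])
qed

definition generic_locus :: "('v \<Rightarrow> complex) set" where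
  "generic_locus = zero_set {f \<in> poly_fun. {u. f u = 0} \<in> F}"

lemma generic_locus_closed: "zariski_closed generic_locus"
  unfolding generic_locus_def by (rule zariski_closed_zero_set) auto

lemma generic_locus_subset:
  assumes "zariski_closed A" "A \<in> F"
  shows "generic_locus \<subseteq> A"
proof -
  obtain S where S: "S \<subseteq> poly_fun" "A = zero_set S"
    using assms(1) unfolding zariski_closed_def by auto
  have "{u. f u = 0} \<in> F" if "f \<in> S" for f
  proof -
    have "A \<subseteq> {u. f u = 0}" using that unfolding S zero_set_def by auto
    then show ?thesis using F_mono assms(2) by blast
  qed
  then show ?thesis using S unfolding generic_locus_def zero_set_def by auto
qed

lemma generic_locus_irreducible:
  assumes Y: "generic_locus \<in> F"
  shows "zariski_irreducible generic_locus"
  unfolding zariski_irreducible_def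
proof (intro conjI allI impI)
  show "generic_locus \<noteq> {}" using Y empty_notin_F by auto
  fix A B assume AB: "zariski_closed A \<and> zariski_closed B \<and> generic_locus \<subseteq> A \<union> B"
  show "generic_locus \<subseteq> A \<or> generic_locus \<subseteq> B"
  proof (rule ccontr)
    assume n: "\<not> (generic_locus \<subseteq> A \<or> generic_locus \<subseteq> B)"
    obtain SA SB where SA: "SA \<subseteq> poly_fun" "A = zero_set SA" and SB: "SB \<subseteq> poly_fun" "B = zero_set SB"
      using AB unfolding zariski_closed_def by auto
    from n obtain f p1 g p2 where f: "f \<in> SA" "p1 \<in> generic_locus" "f p1 \<noteq> 0"
      and g: "g \<in> SB" "p2 \<in> generic_locus" "g p2 \<noteq> 0"
      unfolding SA SB zero_set_def by auto
    have "generic_locus \<subseteq> {u. f u * g u = 0}"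
      using AB f g unfolding SA SB zero_set_def by auto
    then have "{u. f u * g u = 0} \<in> F" using Y F_mono by blast
    then have "{u. f u = 0} \<in> F \<or> {u. g u = 0} \<in> F" using F_prime f g SA SB by blast
    then show False using f g SA SB unfolding generic_locus_def zero_set_def by auto
  qed
qed

text \<open>
  Noetherianity enters only here, through finite generation of submodules of C[x]^B: the
  C[x_i0]-relations among B that hold on a large set are generated by finitely many.
\<close>
lemma generic_relations_finitely_generated:
  assumes "finite B"
  obtains G where "finite G" "\<And>g. g \<in> G \<Longrightarrow> {u. (\<Sum>e\<in>B. poly (g e) (u i0) * e u) = 0} \<in> F"
    "\<And>p. {u. (\<Sum>e\<in>B. poly (p e) (u i0) * e u) = 0} \<in> F \<Longrightarrow> \<exists>l. \<forall>e\<in>B. p e = (\<Sum>g\<in>G. l g * g e)"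
proof -
  define M where "M = {p. {u. (\<Sum>e\<in>B. poly (p e) (u i0) * e u) = 0} \<in> F}"
  have "\<exists>G. finite G \<and> G \<subseteq> M \<and> (\<forall>p\<in>M. \<exists>l. \<forall>e\<in>B. p e = (\<Sum>g\<in>G. l g * g e))"
  proof (rule poly_submodule_finitely_generated[OF assms])
    fix p q assume "p \<in> M" "q \<in> M"
    then have "{u. (\<Sum>e\<in>B. poly (p e) (u i0) * e u) = 0} \<inter> {u. (\<Sum>e\<in>B. poly (q e) (u i0) * e u) = 0} \<in> F"
      unfolding M_def using F_Int by auto
    then show "(\<lambda>e. p e + q e) \<in> M"
      unfolding M_def mem_Collect_eq by (rule F_mono) (auto simp: sum.distrib distrib_right)
  next
    fix p c assume "p \<in> M"
    then show "(\<lambda>e. c * p e) \<in> M"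
      unfolding M_def mem_Collect_eq by (rule F_mono) (auto simp: sum_distrib_left[symmetric] mult.assoc)
  qed
  then show ?thesis using that unfolding M_def by blast
qed

lemma generic_locus_in_F:
  assumes L_generic: "\<And>L. L \<noteq> 0 \<Longrightarrow> {u. poly L (u i0) \<noteq> 0} \<in> F"
  shows "generic_locus \<in> F"
proof -
  obtain T L B where frame: "finite_frame T L B UNIV" using finite_frame_exists by blast
  then have T: "T \<in> F" and L: "L \<noteq> 0" and B: "finite B" and one: "(\<lambda>u. 1) \<in> span_on T i0 B"
    unfolding finite_frame_def by auto
  define comb where "comb = (\<lambda>p u. \<Sum>e\<in>B. poly (p e) (u i0) * e u)"
  obtain G where G: "finite G" "\<And>g. g \<in> G \<Longrightarrow> {u. comb g u = 0} \<in> F"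
    "\<And>p. {u. comb p u = 0} \<in> F \<Longrightarrow> \<exists>l. \<forall>e\<in>B. p e = (\<Sum>g\<in>G. l g * g e)"
    unfolding comb_def by (rule generic_relations_finitely_generated[OF B]) blast
  define Y0 where "Y0 = T \<inter> {u. poly L (u i0) \<noteq> 0} \<inter> (W \<inter> (\<Inter>g\<in>G. {u. comb g u = 0}))"
  have "W \<inter> (\<Inter>g\<in>G. {u. comb g u = 0}) \<in> F" using G(1,2) by (rule W_Int_INT_in_F)
  then have "Y0 \<in> F" unfolding Y0_def using T L_generic[OF L] F_Int by blast
  moreover have "f u = 0" if u: "u \<in> Y0" and f: "f \<in> poly_fun" "{u. f u = 0} \<in> F" for u f
  proof -
    obtain k where "acts_on_span T i0 L B k f"
      using finite_frame_UNIV_acts[OF frame f(1)] unfolding acts_on_loc_span_def by blast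
    from acts_on_spanD[OF this one] obtain p where p: "\<forall>u\<in>T. poly L (u i0) ^ k * f u = comb p u"
      unfolding span_on_def comb_def by auto
    then have "T \<inter> {u. f u = 0} \<subseteq> {u. comb p u = 0}" by auto
    then have "{u. comb p u = 0} \<in> F" using F_Int[OF T f(2)] F_mono by blast
    then obtain l where l: "\<forall>e\<in>B. p e = (\<Sum>g\<in>G. l g * g e)" using G(3) by blast
    have "comb p u = (\<Sum>e\<in>B. \<Sum>g\<in>G. poly (l g) (u i0) * (poly (g e) (u i0) * e u))"
      unfolding comb_def using l by (auto simp: poly_sum sum_distrib_right mult.assoc intro!: sum.cong)
    also have "\<dots> = (\<Sum>g\<in>G. poly (l g) (u i0) * comb g u)"
      unfolding comb_def by (subst sum.swap) (simp add: sum_distrib_left)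
    also have "\<dots> = 0" using u unfolding Y0_def by auto
    finally show "f u = 0" using p u unfolding Y0_def by auto
  qed
  then have "Y0 \<subseteq> generic_locus" unfolding generic_locus_def zero_set_def by blast
  ultimately show ?thesis using F_mono by blast
qed

end

section \<open>W is at most one-dimensional\<close>

lemma standard2_fibres_nonzero:
  assumes "standard2 \<Phi>"
  shows "map_poly (\<lambda>c. poly c a) \<Phi> \<noteq> 0"
proof
  assume z: "map_poly (\<lambda>c. poly c a) \<Phi> = 0"
  define p :: "complex poly" where "p = [:- a, 1:]"
  have dvd: "p dvd coeff \<Phi> i" for i
  proof -
    have "poly (coeff \<Phi> i) a = 0" using arg_cong[OF z, of "\<lambda>P. coeff P i"] by (simp add: coeff_map_poly)
    then show ?thesis unfolding p_def by (simp add: poly_eq_0_iff_dvd)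
  qed
  have "\<Phi> = [:p:] * map_poly (\<lambda>c. c div p) \<Phi>"
    by (rule poly_eqI) (use dvd in \<open>simp add: coeff_map_poly\<close>)
  then have "[:p:] dvd \<Phi>" by (rule dvdI)
  moreover have "degree p > 0" unfolding p_def by simp
  ultimately show False using assms unfolding standard2_def by blast
qed

lemma finite_W_fibre:
  assumes conn: "\<And>j. E\<^sup>*\<^sup>* i0 j" and nz: "\<And>a. map_poly (\<lambda>c. poly c a) \<Phi> \<noteq> 0"
  shows "finite {u \<in> W_var E \<Phi>. (u :: 'v::finite \<Rightarrow> complex) i0 = a}"
proof -
  have "\<exists>A. finite A \<and> (\<forall>u\<in>W_var E \<Phi>. u i0 = a \<longrightarrow> u j \<in> A)" for j
    using conn[of j]
  proof (induction rule: rtranclp_induct)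
    case base
    then show ?case by (intro exI[of _ "{a}"]) auto
  next
    case (step j k)
    then obtain A where A: "finite A" "\<forall>u\<in>W_var E \<Phi>. u i0 = a \<longrightarrow> u j \<in> A" by blast
    define A' where "A' = (\<Union>b\<in>A. {c. poly (map_poly (\<lambda>c. poly c b) \<Phi>) c = 0})"
    have "finite A'" unfolding A'_def using A(1) by (intro finite_UN_I poly_roots_finite nz)
    moreover have "u k \<in> A'" if "u \<in> W_var E \<Phi>" "u i0 = a" for u
      using that A(2) step(2) unfolding A'_def W_var_def eval2_def by auto
    ultimately show ?case by blast
  qed
  then obtain A where A: "\<And>j. finite (A j)" "\<And>j. \<forall>u\<in>W_var E \<Phi>. u i0 = a \<longrightarrow> u j \<in> A j"
    by metis
  have "{u \<in> W_var E \<Phi>. u i0 = a} \<subseteq> Pi\<^sub>E UNIV A" using A(2) by (auto simp: PiE_UNIV_domain)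
  moreover have "finite (Pi\<^sub>E UNIV A)" by (rule finite_PiE) (auto simp: A(1))
  ultimately show ?thesis by (rule finite_subset)
qed

lemma finite_W_poly_zeros:
  assumes conn: "\<And>j. E\<^sup>*\<^sup>* i0 j" and nz: "\<And>a. map_poly (\<lambda>c. poly c a) \<Phi> \<noteq> 0" and "c \<noteq> 0"
  shows "finite {u \<in> W_var E \<Phi>. poly c ((u :: 'v::finite \<Rightarrow> complex) i0) = 0}"
proof -
  have "{u \<in> W_var E \<Phi>. poly c (u i0) = 0} = (\<Union>a\<in>{a. poly c a = 0}. {u \<in> W_var E \<Phi>. u i0 = a})"
    by auto
  then show ?thesis using poly_roots_finite[OF \<open>c \<noteq> 0\<close>] finite_W_fibre[OF conn nz] by auto
qed

lemma irreducible_W_prime_filter: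
  fixes E :: "'v::finite \<Rightarrow> 'v \<Rightarrow> bool" and Y :: "('v \<Rightarrow> complex) set"
  assumes conn: "\<And>j. E\<^sup>*\<^sup>* i0 j" and nz: "\<And>a. map_poly (\<lambda>c. poly c a) \<Phi> \<noteq> 0"
    and Y: "zariski_irreducible Y" "Y \<subseteq> W_var E \<Phi>"
  shows "W_prime_filter E \<Phi> i0 {X. Y \<subseteq> X}"
proof
  show "W_var E \<Phi> \<in> {X. Y \<subseteq> X}" using Y(2) by simp
  show "{} \<notin> {X. Y \<subseteq> X}" using Y(1) unfolding zariski_irreducible_def by auto
  fix f g :: "('v \<Rightarrow> complex) \<Rightarrow> complex"
  assume f: "f \<in> poly_fun" and g: "g \<in> poly_fun" and "{u. f u * g u = 0} \<in> {X. Y \<subseteq> X}"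
  then have "Y \<subseteq> {u. f u = 0} \<union> {u. g u = 0}" by auto
  then show "{u. f u = 0} \<in> {X. Y \<subseteq> X} \<or> {u. g u = 0} \<in> {X. Y \<subseteq> X}"
    using Y(1) zariski_closed_zeros[OF f] zariski_closed_zeros[OF g]
    unfolding zariski_irreducible_def by auto
qed (use conn nz in auto)

definition dim_le_one :: "('v \<Rightarrow> complex) set \<Rightarrow> bool" where
  "dim_le_one W \<longleftrightarrow> (\<forall>Y Z. zariski_irreducible Y \<and> Y \<subseteq> W \<and> zariski_closed Z \<and> \<not> Y \<subseteq> Z
     \<longrightarrow> finite (Y \<inter> Z))"

lemma dim_le_oneD:
  assumes "dim_le_one W" "zariski_irreducible Y" "Y \<subseteq> W" "zariski_closed Z" "infinite (Y \<inter> Z)"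
  shows "Y \<subseteq> Z"
  using assms unfolding dim_le_one_def by blast

text \<open>
  If f vanishes somewhere on Y but not on all of Y, a relation R(x_i0, f) = 0 on Y with
  R(x, 0) \<noteq> 0 confines the zeros of f in Y to finitely many fibres over x_i0.
\<close>
lemma W_dim_le_one:
  assumes conn: "\<And>i j. E\<^sup>*\<^sup>* i j" and nz: "\<And>a. map_poly (\<lambda>c. poly c a) \<Phi> \<noteq> 0"
  shows "dim_le_one (W_var E \<Phi> :: ('v::finite \<Rightarrow> complex) set)"
  unfolding dim_le_one_def
proof (intro allI impI, elim conjE)
  fix Y Z :: "('v \<Rightarrow> complex) set"
  assume Y: "zariski_irreducible Y" "Y \<subseteq> W_var E \<Phi>" and "zariski_closed Z" "\<not> Y \<subseteq> Z"
  obtain i0 :: 'v where True by simp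
  interpret W_prime_filter E \<Phi> i0 "{X. Y \<subseteq> X}"
    by (rule irreducible_W_prime_filter[OF conn nz Y])
  obtain S where S: "S \<subseteq> poly_fun" "Z = zero_set S"
    using \<open>zariski_closed Z\<close> unfolding zariski_closed_def by auto
  then obtain f where f: "f \<in> S" "\<not> Y \<subseteq> {u. f u = 0}"
    using \<open>\<not> Y \<subseteq> Z\<close> unfolding zero_set_def by auto
  then obtain R where R: "coeff R 0 \<noteq> 0" "Y \<subseteq> {u. eval2 R (u i0) (f u) = 0}"
    using algebraic_relation_nonzero_constant[of f] S(1) by auto
  have "Y \<inter> Z \<subseteq> {u \<in> W_var E \<Phi>. poly (coeff R 0) (u i0) = 0}"
    using R(2) Y(2) f(1) unfolding S(2) zero_set_def by (auto simp: eval2_at_0 dest!: bspec)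
  moreover have "finite {u \<in> W_var E \<Phi>. poly (coeff R 0) (u i0) = 0}"
    by (rule finite_W_poly_zeros[OF conn nz R(1)])
  ultimately show "finite (Y \<inter> Z)" by (rule finite_subset)
qed

section \<open>Free ultrafilters and the decomposition of W into curves\<close>

definition infinite_fip :: "'a set set \<Rightarrow> bool" where
  "infinite_fip G \<longleftrightarrow> (\<forall>Y. finite Y \<longrightarrow> Y \<subseteq> G \<longrightarrow> infinite (\<Inter>Y))"

definition free_ultrafilter :: "'a set set \<Rightarrow> bool" where
  "free_ultrafilter U \<longleftrightarrow> (\<forall>X Y. X \<in> U \<longrightarrow> X \<subseteq> Y \<longrightarrow> Y \<in> U) \<and>
     (\<forall>X Y. X \<in> U \<longrightarrow> Y \<in> U \<longrightarrow> X \<inter> Y \<in> U) \<and> (\<forall>X. X \<in> U \<or> - X \<in> U) \<and> (\<forall>X\<in>U. infinite X)"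

lemma
  assumes "free_ultrafilter U"
  shows free_ultrafilter_mono: "X \<in> U \<Longrightarrow> X \<subseteq> Y \<Longrightarrow> Y \<in> U"
    and free_ultrafilter_Int: "X \<in> U \<Longrightarrow> Y \<in> U \<Longrightarrow> X \<inter> Y \<in> U"
    and free_ultrafilter_Compl: "X \<notin> U \<Longrightarrow> - X \<in> U"
    and free_ultrafilter_infinite: "X \<in> U \<Longrightarrow> infinite X"
  using assms unfolding free_ultrafilter_def by blast+

lemma infinite_fip_insert:
  assumes "infinite_fip M" "\<And>Y. finite Y \<Longrightarrow> Y \<subseteq> M \<Longrightarrow> infinite (\<Inter>Y \<inter> X)"
  shows "infinite_fip (insert X M)"
  unfolding infinite_fip_def
proof (intro allI impI)
  fix Y assume Y: "finite Y" "Y \<subseteq> insert X M"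
  have "\<Inter>(Y - {X}) \<inter> X \<subseteq> \<Inter>Y" by auto
  moreover have "infinite (\<Inter>(Y - {X}) \<inter> X)" using Y by (intro assms(2)) auto
  ultimately show "infinite (\<Inter>Y)" using finite_subset by blast
qed

lemma infinite_fip_maximal_exists:
  assumes "infinite_fip X0"
  obtains M where "X0 \<subseteq> M" "infinite_fip M" "\<And>X. infinite_fip (insert X M) \<Longrightarrow> X \<in> M"
proof -
  define A where "A = {G. X0 \<subseteq> G \<and> infinite_fip G}"
  have "\<exists>M\<in>A. \<forall>X\<in>A. M \<subseteq> X \<longrightarrow> X = M"
  proof (rule Zorn_Lemma2, intro ballI)
    fix C assume C: "C \<in> chains A"
    show "\<exists>U\<in>A. \<forall>X\<in>C. X \<subseteq> U"
    proof (cases "C = {}")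
      case True
      then show ?thesis using assms unfolding A_def by auto
    next
      case False
      have CA: "C \<subseteq> A" using C unfolding chains_def by auto
      have ch: "subset.chain A C" using C unfolding chains_alt_def by auto
      have "infinite_fip (\<Union>C)" unfolding infinite_fip_def
      proof (intro allI impI)
        fix Y assume Y: "finite Y" "Y \<subseteq> \<Union>C"
        obtain G where "G \<in> C" "Y \<subseteq> G" by (rule finite_subset_Union_chain[OF Y False ch])
        then show "infinite (\<Inter>Y)" using CA Y unfolding A_def infinite_fip_def by auto
      qed
      moreover have "X0 \<subseteq> \<Union>C" using False CA unfolding A_def by auto
      ultimately show ?thesis unfolding A_def by auto
    qed
  qed
  then obtain M where M: "M \<in> A" and max: "\<And>X. X \<in> A \<Longrightarrow> M \<subseteq> X \<Longrightarrow> X = M" by blast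
  have "X \<in> M" if "infinite_fip (insert X M)" for X
  proof -
    have "insert X M \<in> A" using that M unfolding A_def by auto
    then show ?thesis using max by blast
  qed
  then show ?thesis using that M unfolding A_def by blast
qed

lemma maximal_infinite_fip_superset:
  assumes M: "infinite_fip M" and max: "\<And>X. infinite_fip (insert X M) \<Longrightarrow> X \<in> M"
    and Y0: "finite Y0" "Y0 \<subseteq> M" "\<Inter>Y0 \<subseteq> X"
  shows "X \<in> M"
proof (rule max, rule infinite_fip_insert[OF M])
  fix Y assume "finite Y" "Y \<subseteq> M"
  then have "finite (Y \<union> Y0)" "Y \<union> Y0 \<subseteq> M" using Y0 by auto
  then have "infinite (\<Inter>(Y \<union> Y0))" using M unfolding infinite_fip_def by blast
  moreover have "\<Inter>(Y \<union> Y0) \<subseteq> \<Inter>Y \<inter> X" using Y0(3) by auto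
  ultimately show "infinite (\<Inter>Y \<inter> X)" using finite_subset by blast
qed

lemma maximal_infinite_fip_free_ultrafilter:
  assumes M: "infinite_fip M" and max: "\<And>X. infinite_fip (insert X M) \<Longrightarrow> X \<in> M"
  shows "free_ultrafilter M"
  unfolding free_ultrafilter_def
proof (intro conjI allI impI ballI)
  fix X Y assume "X \<in> M" "X \<subseteq> Y"
  then show "Y \<in> M" by (intro maximal_infinite_fip_superset[OF M max, of "{X}"]) auto
next
  fix X Y assume "X \<in> M" "Y \<in> M"
  then show "X \<inter> Y \<in> M" by (intro maximal_infinite_fip_superset[OF M max, of "{X, Y}"]) auto
next
  fix X assume "X \<in> M"
  then have "infinite (\<Inter>{X})" using M unfolding infinite_fip_def by blast
  then show "infinite X" by simp
next
  fix X
  show "X \<in> M \<or> - X \<in> M"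
  proof (rule ccontr)
    assume "\<not> (X \<in> M \<or> - X \<in> M)"
    then have "\<not> infinite_fip (insert X M)" "\<not> infinite_fip (insert (- X) M)" using max by blast+
    then obtain Y1 Y2 where Y1: "finite Y1" "Y1 \<subseteq> M" "finite (\<Inter>Y1 \<inter> X)"
      and Y2: "finite Y2" "Y2 \<subseteq> M" "finite (\<Inter>Y2 \<inter> - X)"
      using infinite_fip_insert[OF M, of X] infinite_fip_insert[OF M, of "- X"] by blast
    have "\<Inter>(Y1 \<union> Y2) \<subseteq> (\<Inter>Y1 \<inter> X) \<union> (\<Inter>Y2 \<inter> - X)" by auto
    moreover have "infinite (\<Inter>(Y1 \<union> Y2))" using M Y1 Y2 unfolding infinite_fip_def by blast
    ultimately show False using Y1(3) Y2(3) finite_subset by blast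
  qed
qed

lemma free_ultrafilter_exists:
  assumes "infinite_fip X0"
  obtains U where "free_ultrafilter U" "X0 \<subseteq> U"
  using infinite_fip_maximal_exists[OF assms] maximal_infinite_fip_free_ultrafilter by metis

lemma free_ultrafilter_W_prime_filter:
  fixes E :: "'v::finite \<Rightarrow> 'v \<Rightarrow> bool" and U :: "('v \<Rightarrow> complex) set set"
  assumes conn: "\<And>j. E\<^sup>*\<^sup>* i0 j" and nz: "\<And>a. map_poly (\<lambda>c. poly c a) \<Phi> \<noteq> 0"
    and U: "free_ultrafilter U" and WU: "W_var E \<Phi> \<in> U"
  shows "W_prime_filter E \<Phi> i0 U"
proof
  fix f g :: "('v \<Rightarrow> complex) \<Rightarrow> complex"
  assume fg: "{u. f u * g u = 0} \<in> U"
  show "{u. f u = 0} \<in> U \<or> {u. g u = 0} \<in> U"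
  proof (rule ccontr)
    assume "\<not> ?thesis"
    then have "- {u. f u = 0} \<in> U" "- {u. g u = 0} \<in> U" using free_ultrafilter_Compl[OF U] by auto
    then have "{u. f u * g u = 0} \<inter> (- {u. f u = 0} \<inter> - {u. g u = 0}) \<in> U"
      using fg free_ultrafilter_Int[OF U] by blast
    moreover have "{u. f u * g u = 0} \<inter> (- {u. f u = 0} \<inter> - {u. g u = 0}) = {}" by auto
    ultimately show False using free_ultrafilter_infinite[OF U] by fastforce
  qed
qed (use conn nz WU free_ultrafilter_mono[OF U] free_ultrafilter_Int[OF U]
      free_ultrafilter_infinite[OF U, of "{}"] in auto)

lemma free_ultrafilter_irreducible_member:
  fixes E :: "'v::finite \<Rightarrow> 'v \<Rightarrow> bool"
  assumes conn: "\<And>i j. E\<^sup>*\<^sup>* i j" and nz: "\<And>a. map_poly (\<lambda>c. poly c a) \<Phi> \<noteq> 0"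
    and U: "free_ultrafilter U" and WU: "W_var E \<Phi> \<in> U"
  shows "\<exists>Y\<in>U. zariski_closed Y \<and> zariski_irreducible Y \<and> infinite Y \<and> Y \<subseteq> W_var E \<Phi>"
proof -
  obtain i0 :: 'v where True by simp
  interpret W_prime_filter E \<Phi> i0 U by (rule free_ultrafilter_W_prime_filter[OF conn nz U WU])
  have "{u. poly L (u i0) \<noteq> 0} \<in> U" if "L \<noteq> 0" for L
  proof -
    have "finite {u \<in> W. poly L (u i0) = 0}" by (rule finite_W_poly_zeros[OF conn nz that])
    then have "- {u \<in> W. poly L (u i0) = 0} \<in> U"
      using free_ultrafilter_Compl[OF U] free_ultrafilter_infinite[OF U] by blast
    then have "W \<inter> - {u \<in> W. poly L (u i0) = 0} \<in> U" using F_Int WU by blast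
    moreover have "W \<inter> - {u \<in> W. poly L (u i0) = 0} \<subseteq> {u. poly L (u i0) \<noteq> 0}" by blast
    ultimately show ?thesis using F_mono by blast
  qed
  then have Y: "generic_locus \<in> U" by (rule generic_locus_in_F)
  moreover have "infinite generic_locus" using Y by (rule free_ultrafilter_infinite[OF U])
  moreover have "generic_locus \<subseteq> W" by (rule generic_locus_subset[OF W_var_closed WU])
  ultimately show ?thesis using generic_locus_closed generic_locus_irreducible[OF Y] by blast
qed

definition curve_decomposition :: "('v \<Rightarrow> complex) set \<Rightarrow> ('v \<Rightarrow> complex) set set \<Rightarrow> bool" where
  "curve_decomposition W C \<longleftrightarrow> finite C \<and> finite (W - \<Union>C) \<and>
     (\<forall>Y\<in>C. zariski_closed Y \<and> zariski_irreducible Y \<and> infinite Y \<and> Y \<subseteq> W)"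

lemma infinite_fip_complements:
  assumes "\<And>C. finite C \<Longrightarrow> C \<subseteq> \<C> \<Longrightarrow> infinite (W - \<Union>C)"
  shows "infinite_fip (insert W ((\<lambda>Y. W - Y) ` \<C>))"
  unfolding infinite_fip_def
proof (intro allI impI)
  fix Z assume Z: "finite Z" "Z \<subseteq> insert W ((\<lambda>Y. W - Y) ` \<C>)"
  then have sub: "Z - {W} \<subseteq> (\<lambda>Y. W - Y) ` \<C>" by auto
  have "finite (Z - {W})" using Z(1) by simp
  from finite_subset_image[OF this sub]
  obtain C where C: "C \<subseteq> \<C>" "finite C" "Z - {W} = (\<lambda>Y. W - Y) ` C" by (elim exE conjE)
  have "W - \<Union>C \<subseteq> \<Inter>Z"
  proof
    fix x assume x: "x \<in> W - \<Union>C"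
    have "x \<in> z" if "z \<in> Z" for z
    proof (cases "z = W")
      case False
      then have "z \<in> Z - {W}" using that by blast
      then obtain Y where "Y \<in> C" "z = W - Y" unfolding C(3) by blast
      then show ?thesis using x by blast
    qed (use x in blast)
    then show "x \<in> \<Inter>Z" by blast
  qed
  then show "infinite (\<Inter>Z)" using assms[OF C(2,1)] finite_subset by blast
qed

text \<open>
  Otherwise the complements in W of all infinite irreducible closed subsets have infinite
  finite intersections; a free ultrafilter containing them and W contains one of these
  subsets together with its complement.
\<close>
lemma W_curve_decomposition:
  fixes E :: "'v::finite \<Rightarrow> 'v \<Rightarrow> bool"
  assumes conn: "\<And>i j. E\<^sup>*\<^sup>* i j" and nz: "\<And>a. map_poly (\<lambda>c. poly c a) \<Phi> \<noteq> 0"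
  shows "\<exists>C. curve_decomposition (W_var E \<Phi>) C"
proof (rule ccontr)
  define W where "W = W_var E \<Phi>"
  define curves where "curves = {Y. zariski_closed Y \<and> zariski_irreducible Y \<and> infinite Y \<and> Y \<subseteq> W}"
  assume "\<nexists>C. curve_decomposition (W_var E \<Phi>) C"
  then have "infinite (W - \<Union>C)" if "finite C" "C \<subseteq> curves" for C
    using that unfolding curve_decomposition_def curves_def W_def by blast
  then obtain U where U: "free_ultrafilter U" "insert W ((\<lambda>Y. W - Y) ` curves) \<subseteq> U"
    using free_ultrafilter_exists infinite_fip_complements by metis
  then have "W \<in> U" by auto
  then obtain Y where "Y \<in> U" "Y \<in> curves"
    using free_ultrafilter_irreducible_member[OF conn nz U(1)] unfolding W_def curves_def by blast
  moreover have "W - Y \<in> U" using U(2) \<open>Y \<in> curves\<close> by auto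
  ultimately have "Y \<inter> (W - Y) \<in> U" using free_ultrafilter_Int[OF U(1)] by blast
  then show False using free_ultrafilter_infinite[OF U(1)] by auto
qed

section \<open>Improper points and dimension of U\<close>

lemma curve_decomposition_finite_subset:
  assumes "curve_decomposition W C" "A \<subseteq> W" "\<And>Y. Y \<in> C \<Longrightarrow> finite (Y \<inter> A)"
  shows "finite A"
proof -
  have "A \<subseteq> (W - \<Union>C) \<union> (\<Union>Y\<in>C. Y \<inter> A)" using assms(2) by auto
  moreover have "finite (\<Union>Y\<in>C. Y \<inter> A)"
    using assms(1,3) unfolding curve_decomposition_def by (intro finite_UN_I) auto
  moreover have "finite (W - \<Union>C)" using assms(1) unfolding curve_decomposition_def by blast
  ultimately show ?thesis by (meson finite_UnI finite_subset)
qed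

lemma curve_decomposition_infinite_closed:
  assumes curve: "dim_le_one W" and C: "curve_decomposition W C"
    and V: "zariski_closed V" "V \<subseteq> W" "infinite V"
  shows "\<exists>Y\<in>C. Y \<subseteq> V"
proof -
  have "\<not> (\<forall>Y\<in>C. finite (Y \<inter> V))" using curve_decomposition_finite_subset[OF C V(2)] V(3) by blast
  then obtain Y where Y: "Y \<in> C" "infinite (Y \<inter> V)" by blast
  then have "zariski_irreducible Y" "Y \<subseteq> W" using C unfolding curve_decomposition_def by auto
  then have "Y \<subseteq> V" using dim_le_oneD[OF curve _ _ V(1) Y(2)] by blast
  then show ?thesis using Y(1) by blast
qed

text \<open>
  Otherwise P, hence its closure, is covered by the other curves and the finite rest, and
  the irreducible Y would lie in one of these closed sets, which is impossible.
\<close>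
lemma curve_in_closure_meets:
  assumes curve: "dim_le_one W" and C: "curve_decomposition W C" and "Y \<in> C"
    and "P \<subseteq> W" and Y: "Y \<subseteq> zariski_closure P"
  shows "Y \<inter> P \<noteq> {}"
proof
  assume disj: "Y \<inter> P = {}"
  have fin: "finite C" "finite (W - \<Union>C)"
    and comp: "\<And>Y. Y \<in> C \<Longrightarrow> zariski_closed Y \<and> zariski_irreducible Y \<and> infinite Y \<and> Y \<subseteq> W"
    using C unfolding curve_decomposition_def by auto
  define C' where "C' = insert (W - \<Union>C) (C - {Y})"
  have "finite C'" unfolding C'_def using fin by auto
  moreover have closed: "\<And>A. A \<in> C' \<Longrightarrow> zariski_closed A"
    unfolding C'_def using fin(2) comp by (auto intro: zariski_closed_finite)
  moreover have "P \<subseteq> \<Union>C'" using \<open>P \<subseteq> W\<close> disj unfolding C'_def by blast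
  ultimately have "Y \<subseteq> \<Union>C'"
    using Y zariski_closure_minimal zariski_closed_Union by blast
  then obtain A where A: "A \<in> C'" "Y \<subseteq> A"
    using zariski_irreducible_Union[OF _ \<open>finite C'\<close> closed] comp[OF \<open>Y \<in> C\<close>] by blast
  have "finite Y"
  proof (cases "A = W - \<Union>C")
    case True
    then show ?thesis using A(2) fin(2) finite_subset by blast
  next
    case False
    then have "A \<in> C" "\<not> A \<subseteq> Y" using A unfolding C'_def by auto
    then have "finite (A \<inter> Y)"
      using dim_le_oneD[OF curve] comp[OF \<open>A \<in> C\<close>] comp[OF \<open>Y \<in> C\<close>] by blast
    then show ?thesis using A(2) by (simp add: Int_absorb1)
  qed
  then show False using comp[OF \<open>Y \<in> C\<close>] by blast
qed

lemma dim_le_one_closure_Int_finite: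
  assumes curve: "dim_le_one W" and W: "zariski_closed W" and C: "curve_decomposition W C"
    and D: "zariski_closed D" and P: "P \<subseteq> W" "P \<inter> D = {}"
  shows "finite (zariski_closure P \<inter> D)"
proof (rule curve_decomposition_finite_subset[OF C])
  show "zariski_closure P \<inter> D \<subseteq> W" using zariski_closure_minimal[OF P(1) W] by blast
  fix Y assume "Y \<in> C"
  then have Y: "zariski_irreducible Y" "Y \<subseteq> W" using C unfolding curve_decomposition_def by auto
  have "\<not> Y \<subseteq> zariski_closure P \<inter> D"
    using curve_in_closure_meets[OF curve C \<open>Y \<in> C\<close> P(1)] P(2) by blast
  moreover have "zariski_closed (zariski_closure P \<inter> D)"
    by (rule zariski_closed_Int[OF zariski_closure_closed D])
  ultimately show "finite (Y \<inter> (zariski_closure P \<inter> D))"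
    using dim_le_oneD[OF curve Y] by blast
qed

lemma irred_chain_le_one:
  assumes curve: "dim_le_one W" and "V \<subseteq> W" and "irred_chain V k"
  shows "k \<le> 1"
proof (rule ccontr)
  assume "\<not> k \<le> 1"
  then have k: "Suc (Suc 0) \<le> k" by simp
  obtain Y where Y: "\<And>i. i \<le> k \<Longrightarrow> zariski_closed (Y i) \<and> zariski_irreducible (Y i) \<and> Y i \<subseteq> V"
    and less: "\<And>i. i < k \<Longrightarrow> Y i \<subset> Y (Suc i)"
    using \<open>irred_chain V k\<close> unfolding irred_chain_def by blast
  have Y0: "zariski_closed (Y 0)" "zariski_irreducible (Y 0)" using Y[of 0] by auto
  have Y1: "zariski_closed (Y 1)" "zariski_irreducible (Y 1)" using Y[of 1] k by auto
  have Y2: "zariski_irreducible (Y 2)" "Y 2 \<subseteq> W" using Y[of 2] k \<open>V \<subseteq> W\<close> by auto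
  have "Y 1 \<subset> Y 2" using less[of 1] k by (simp add: numeral_2_eq_2)
  then have "finite (Y 2 \<inter> Y 1)" using dim_le_oneD[OF curve Y2 Y1(1)] by blast
  then have "finite (Y 1)" using \<open>Y 1 \<subset> Y 2\<close> by (simp add: Int_absorb1)
  then have "zariski_closed (Y 1 - Y 0)" by (intro zariski_closed_finite) auto
  moreover have "Y 1 \<subseteq> Y 0 \<union> (Y 1 - Y 0)" by blast
  ultimately have "Y 1 \<subseteq> Y 0 \<or> Y 1 \<subseteq> Y 1 - Y 0"
    using Y0(1) Y1(2) unfolding zariski_irreducible_def by blast
  then show False using less[of 0] k Y0(2) unfolding zariski_irreducible_def by auto
qed

lemma zariski_dim_eq_one:
  assumes curve: "dim_le_one W" and "V \<subseteq> W"
    and Y: "zariski_closed Y" "zariski_irreducible Y" "infinite Y" "Y \<subseteq> V"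
  shows "zariski_dim V = 1"
proof -
  obtain q where "q \<in> Y" using Y(3) by (metis ex_in_conv finite.emptyI)
  then have "irred_chain V 1" unfolding irred_chain_def
    using Y zariski_closed_singleton[of q] by (intro exI[of _ "\<lambda>i. if i = 0 then {q} else Y"])
      (auto simp: zariski_irreducible_def)
  moreover have "k \<le> 1" if "irred_chain V k" for k by (rule irred_chain_le_one[OF curve \<open>V \<subseteq> W\<close> that])
  ultimately show ?thesis unfolding zariski_dim_def by (intro cSup_eq_maximum) auto
qed

lemma zariski_dim_eq_one_if_infinite:
  assumes curve: "dim_le_one W" and C: "curve_decomposition W C"
    and V: "zariski_closed V" "V \<subseteq> W" "infinite V"
  shows "zariski_dim V = 1"
proof -
  obtain Y where "Y \<in> C" "Y \<subseteq> V" using curve_decomposition_infinite_closed[OF curve C V] by blast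
  then show ?thesis
    using C zariski_dim_eq_one[OF curve V(2)] unfolding curve_decomposition_def by blast
qed

theorem mainTheorem3:
  fixes E :: "'v::finite \<Rightarrow> 'v \<Rightarrow> bool" and \<Phi> :: "complex poly poly" and d :: nat
  assumes "simple_graph E" and "graph_connected E" and "regular E d"
    and "symmetric2 \<Phi>" and "standard2 \<Phi>" and "partial_degree \<Phi> = d"
  shows "finite {u \<in> U_var E \<Phi>. improper u} \<and>
         ({u \<in> U_var E \<Phi>. improper u} \<noteq> {} \<longrightarrow> zariski_dim (U_var E \<Phi>) = 1)"
proof -
  have conn: "\<And>i j. E\<^sup>*\<^sup>* i j" using assms(2) unfolding graph_connected_def by auto
  have nz: "\<And>a. map_poly (\<lambda>c. poly c a) \<Phi> \<noteq> 0" using assms(5) by (rule standard2_fibres_nonzero)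
  have curve: "dim_le_one (W_var E \<Phi>)" by (rule W_dim_le_one[OF conn nz])
  obtain C where C: "curve_decomposition (W_var E \<Phi>) C" using W_curve_decomposition[OF conn nz] by blast
  define P where "P = W_var E \<Phi> - Z_var E \<Phi>"
  define D where "D = {u :: 'v \<Rightarrow> complex. improper u}"
  have P: "P \<subseteq> W_var E \<Phi>" "P \<inter> D = {}" unfolding P_def D_def Z_var_def improper_def by auto
  have J: "{u \<in> U_var E \<Phi>. improper u} = zariski_closure P \<inter> D" unfolding U_var_def P_def D_def by auto
  have "finite (zariski_closure P \<inter> D)"
    by (rule dim_le_one_closure_Int_finite[OF curve W_var_closed C _ P]) (simp add: D_def improper_closed)
  moreover have "zariski_dim (zariski_closure P) = 1" if "zariski_closure P \<inter> D \<noteq> {}"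
  proof (rule zariski_dim_eq_one_if_infinite[OF curve C zariski_closure_closed])
    show "zariski_closure P \<subseteq> W_var E \<Phi>" by (rule zariski_closure_minimal[OF P(1) W_var_closed])
    show "infinite (zariski_closure P)" using zariski_closure_finite P(2) that by force
  qed
  ultimately show ?thesis unfolding J by (simp add: U_var_def P_def)
qed

end
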